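(* Let $(M,g)$ be an $n$-dimensional Riemannian manifold with $n>3$ and constant scalar curvature, let $V$ be a vector field on $M$ with $\nabla_X V=aX$ for all $X\in\chi(M)$ ($\nabla$ the Levi-Civita connection), where $a$ is a nonzero real constant, and let $\eta$ be the $g$-dual $1$-form of $V$. If $(V,\lambda,\mu)$ is an almost $\eta$-Ricci soliton on $(M,g)$, then $M$ is Ricci-flat.
   Context: An almost $\eta$-Ricci soliton $(V,\lambda,\mu)$ on $(M,g)$, for a given $1$-form $\eta$, consists of a vector field $V$ and smooth functions $\lambda,\mu$ on $M$ with $\frac12\pounds_V g+\mathrm{Ric}=\lambda g+\mu\,\eta\otimes\eta$, where $\pounds_V$ is the Lie derivative and $\mathrm{Ric}$ the Ricci tensor of $g$. *)

theory Defs
  imports "HOL-Analysis.Analysis"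
begin

text \<open>Local coordinate (chart) description of a Riemannian manifold: an open set
  U of R^n (points of type real^'n) carrying a smooth metric tensor field g,
  given by its component matrix g x $ i $ j.\<close>

definition pd :: "'n::finite \<Rightarrow> (real^'n \<Rightarrow> real) \<Rightarrow> real^'n \<Rightarrow> real" where
  "pd i f x = deriv (\<lambda>t. f (x + t *\<^sub>R axis i 1)) 0"

definition smooth_on :: "(real^'n::finite) set \<Rightarrow> (real^'n \<Rightarrow> real) \<Rightarrow> bool" where
  "smooth_on U f \<longleftrightarrow> (\<forall>is::'n list. continuous_on U (foldr pd is f) \<and>
      (\<forall>x\<in>U. foldr pd is f differentiable (at x)))"

definition riemannian_metric_on ::
  "(real^'n::finite) set \<Rightarrow> (real^'n \<Rightarrow> real^'n^'n) \<Rightarrow> bool" where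
  "riemannian_metric_on U g \<longleftrightarrow> open U \<and>
     (\<forall>i j. smooth_on U (\<lambda>x. g x $ i $ j)) \<and>
     (\<forall>x\<in>U. \<forall>i j. g x $ i $ j = g x $ j $ i) \<and>
     (\<forall>x\<in>U. \<forall>v. v \<noteq> 0 \<longrightarrow> (\<Sum>i\<in>UNIV. \<Sum>j\<in>UNIV. g x $ i $ j * v $ i * v $ j) > 0)"

definition vector_field_on :: "(real^'n::finite) set \<Rightarrow> (real^'n \<Rightarrow> real^'n) \<Rightarrow> bool" where
  "vector_field_on U V \<longleftrightarrow> (\<forall>k. smooth_on U (\<lambda>x. V x $ k))"

definition ginv :: "(real^'n::finite \<Rightarrow> real^'n^'n) \<Rightarrow> 'n \<Rightarrow> 'n \<Rightarrow> real^'n \<Rightarrow> real" where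
  "ginv g i j x = matrix_inv (g x) $ i $ j"

definition christoffel ::
  "(real^'n::finite \<Rightarrow> real^'n^'n) \<Rightarrow> 'n \<Rightarrow> 'n \<Rightarrow> 'n \<Rightarrow> real^'n \<Rightarrow> real" where
  "christoffel g k i j x = (1/2) * (\<Sum>l\<in>UNIV. ginv g k l x *
      (pd i (\<lambda>y. g y $ j $ l) x + pd j (\<lambda>y. g y $ i $ l) x - pd l (\<lambda>y. g y $ i $ j) x))"

definition cov_deriv ::
  "(real^'n::finite \<Rightarrow> real^'n^'n) \<Rightarrow> (real^'n \<Rightarrow> real^'n) \<Rightarrow> (real^'n \<Rightarrow> real^'n) \<Rightarrow> real^'n \<Rightarrow> real^'n" where
  "cov_deriv g X V x = (\<chi> k. \<Sum>i\<in>UNIV. X x $ i *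
      (pd i (\<lambda>y. V y $ k) x + (\<Sum>j\<in>UNIV. christoffel g k i j x * V x $ j)))"

definition ricci :: "(real^'n::finite \<Rightarrow> real^'n^'n) \<Rightarrow> 'n \<Rightarrow> 'n \<Rightarrow> real^'n \<Rightarrow> real" where
  "ricci g i j x = (\<Sum>k\<in>UNIV. pd k (christoffel g k i j) x - pd j (christoffel g k k i) x
      + (\<Sum>p\<in>UNIV. christoffel g k k p x * christoffel g p i j x
             - christoffel g k j p x * christoffel g p k i x))"

definition scalar_curvature :: "(real^'n::finite \<Rightarrow> real^'n^'n) \<Rightarrow> real^'n \<Rightarrow> real" where
  "scalar_curvature g x = (\<Sum>i\<in>UNIV. \<Sum>j\<in>UNIV. ginv g i j x * ricci g i j x)"

definition lie_deriv_metric ::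
  "(real^'n::finite \<Rightarrow> real^'n^'n) \<Rightarrow> (real^'n \<Rightarrow> real^'n) \<Rightarrow> 'n \<Rightarrow> 'n \<Rightarrow> real^'n \<Rightarrow> real" where
  "lie_deriv_metric g V i j x = (\<Sum>k\<in>UNIV. V x $ k * pd k (\<lambda>y. g y $ i $ j) x
      + g x $ k $ j * pd i (\<lambda>y. V y $ k) x + g x $ i $ k * pd j (\<lambda>y. V y $ k) x)"

definition dual_form :: "(real^'n::finite \<Rightarrow> real^'n^'n) \<Rightarrow> (real^'n \<Rightarrow> real^'n) \<Rightarrow> 'n \<Rightarrow> real^'n \<Rightarrow> real" where
  "dual_form g V i x = (\<Sum>j\<in>UNIV. g x $ i $ j * V x $ j)"

definition almost_eta_ricci_soliton ::
  "(real^'n::finite) set \<Rightarrow> (real^'n \<Rightarrow> real^'n^'n) \<Rightarrow> ('n \<Rightarrow> real^'n \<Rightarrow> real) \<Rightarrow>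
   (real^'n \<Rightarrow> real^'n) \<Rightarrow> (real^'n \<Rightarrow> real) \<Rightarrow> (real^'n \<Rightarrow> real) \<Rightarrow> bool" where
  "almost_eta_ricci_soliton U g eta V lam mu \<longleftrightarrow>
     vector_field_on U V \<and> smooth_on U lam \<and> smooth_on U mu \<and>
     (\<forall>x\<in>U. \<forall>i j. (1/2) * lie_deriv_metric g V i j x + ricci g i j x
        = lam x * g x $ i $ j + mu x * eta i x * eta j x)"

definition ricci_flat_on :: "(real^'n::finite) set \<Rightarrow> (real^'n \<Rightarrow> real^'n^'n) \<Rightarrow> bool" where
  "ricci_flat_on U g \<longleftrightarrow> (\<forall>x\<in>U. \<forall>i j. ricci g i j x = 0)"

end

theory Submission
  imports Defs
begin

text \<open>Since \<open>\<nabla>V = a Id\<close>, \<open>V\<close> is homothetic: \<open>L\<^sub>V g = 2a g\<close>, so the flow of \<open>V\<close> preserves the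
  Levi-Civita connection and \<open>L\<^sub>V Ric = 0\<close>; moreover \<open>R(X, Y) V = 0\<close>, so \<open>Ric(V, -) = 0\<close>.
  The soliton equation becomes \<open>Ric = (\<lambda> - a) g + \<mu> \<eta> \<otimes> \<eta>\<close>. Where \<open>V \<noteq> 0\<close>, contracting with \<open>V\<close>
  gives \<open>\<lambda> - a + \<mu> |V|\<^sup>2 = 0\<close> and tracing then gives \<open>S = (n - 1)(\<lambda> - a)\<close>, so \<open>\<lambda>\<close> is locally
  constant. Applying \<open>L\<^sub>V\<close> to the soliton equation yields
  \<open>(V\<lambda> + 2a(\<lambda> - a)) g + (V\<mu> + 4a\<mu>) \<eta> \<otimes> \<eta> = 0\<close>; as \<open>g\<close> and \<open>\<eta> \<otimes> \<eta>\<close> are independent when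
  \<open>n \<ge> 2\<close>, \<open>\<lambda> = a\<close>, hence \<open>\<mu> = 0\<close> where \<open>V \<noteq> 0\<close>, and \<open>Ric = 0\<close>.\<close>

lemma has_real_derivative_along_axis:
  fixes f :: "real^'n::finite \<Rightarrow> real"
  assumes "(f has_derivative f') (at (y + t *\<^sub>R axis i 1))"
  shows "((\<lambda>s. f (y + s *\<^sub>R axis i 1)) has_real_derivative f' (axis i 1)) (at t)"
proof -
  have "((\<lambda>s::real. y + s *\<^sub>R axis i 1) has_derivative (\<lambda>s. s *\<^sub>R axis i 1)) (at t)"
    by (auto intro!: derivative_eq_intros)
  from has_derivative_compose[OF this assms]
  have "((\<lambda>s. f (y + s *\<^sub>R axis i 1)) has_derivative (\<lambda>s. f' (s *\<^sub>R axis i 1))) (at t)"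
    by (simp add: o_def)
  moreover have "(\<lambda>s. f' (s *\<^sub>R axis i 1)) = (*) (f' (axis i 1))"
    using has_derivative_linear[OF assms] by (auto simp: linear_cmul mult.commute)
  ultimately show ?thesis by (simp add: has_field_derivative_def)
qed

lemma pd_eq_frechet:
  assumes "(f has_derivative f') (at x)"
  shows "pd i f x = f' (axis i 1)"
  unfolding pd_def by (rule DERIV_imp_deriv, rule has_real_derivative_along_axis) (simp add: assms)

lemma pd_has_real_derivative_along_axis:
  fixes f :: "real^'n::finite \<Rightarrow> real"
  assumes "f differentiable (at (y + t *\<^sub>R axis i 1))"
  shows "((\<lambda>s. f (y + s *\<^sub>R axis i 1)) has_real_derivative pd i f (y + t *\<^sub>R axis i 1)) (at t)"
proof -
  obtain f' where "(f has_derivative f') (at (y + t *\<^sub>R axis i 1))"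
    using assms by (auto simp: differentiable_def)
  then show ?thesis
    using has_real_derivative_along_axis pd_eq_frechet by metis
qed

lemma pd_has_real_derivative:
  fixes f :: "real^'n::finite \<Rightarrow> real"
  assumes "f differentiable (at x)"
  shows "((\<lambda>t. f (x + t *\<^sub>R axis i 1)) has_real_derivative pd i f x) (at 0)"
  using pd_has_real_derivative_along_axis[of f x 0 i] assms by simp

lemma pd_const [simp]: "pd i (\<lambda>y. c) x = 0"
  unfolding pd_def by simp

lemma pd_add:
  assumes "f differentiable (at x)" "g differentiable (at x)"
  shows "pd i (\<lambda>y. f y + g y) x = pd i f x + pd i g x"
  unfolding pd_def[of i "\<lambda>y. f y + g y"]
  by (rule DERIV_imp_deriv, rule DERIV_add[OF pd_has_real_derivative[OF assms(1)] pd_has_real_derivative[OF assms(2)]])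

lemma pd_diff:
  assumes "f differentiable (at x)" "g differentiable (at x)"
  shows "pd i (\<lambda>y. f y - g y) x = pd i f x - pd i g x"
  unfolding pd_def[of i "\<lambda>y. f y - g y"]
  by (rule DERIV_imp_deriv, rule DERIV_diff[OF pd_has_real_derivative[OF assms(1)] pd_has_real_derivative[OF assms(2)]])

lemma pd_mult:
  assumes "f differentiable (at x)" "g differentiable (at x)"
  shows "pd i (\<lambda>y. f y * g y) x = pd i f x * g x + f x * pd i g x"
proof -
  have "((\<lambda>t. f (x + t *\<^sub>R axis i 1) * g (x + t *\<^sub>R axis i 1)) has_real_derivative
      pd i f x * g (x + 0 *\<^sub>R axis i 1) + pd i g x * f (x + 0 *\<^sub>R axis i 1)) (at 0)"
    by (rule DERIV_mult[OF pd_has_real_derivative[OF assms(1)] pd_has_real_derivative[OF assms(2)]])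
  then show ?thesis
    unfolding pd_def[of i "\<lambda>y. f y * g y"] by (simp add: DERIV_imp_deriv algebra_simps)
qed

lemma pd_inverse:
  assumes "h differentiable (at x)" "h x \<noteq> 0"
  shows "pd i (\<lambda>y. 1 / h y) x = - pd i h x / (h x)\<^sup>2"
proof -
  have "((\<lambda>t. 1 / h (x + t *\<^sub>R axis i 1)) has_real_derivative - pd i h x / (h x)\<^sup>2) (at 0)"
    using DERIV_inverse_fun[OF pd_has_real_derivative[OF assms(1)]] assms(2)
    by (simp add: divide_inverse power2_eq_square)
  then show ?thesis
    unfolding pd_def[of i "\<lambda>y. 1 / h y"] by (rule DERIV_imp_deriv)
qed

lemma pd_sum:
  assumes "finite S" "\<And>s. s \<in> S \<Longrightarrow> f s differentiable (at x)"
  shows "pd i (\<lambda>y. \<Sum>s\<in>S. f s y) x = (\<Sum>s\<in>S. pd i (f s) x)"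
  using assms
proof (induction S rule: finite_induct)
  case (insert s S)
  have "(\<lambda>y. \<Sum>s\<in>S. f s y) differentiable (at x)"
    using insert by (auto intro!: differentiable_sum)
  then show ?case
    using insert pd_add[of "f s" x "\<lambda>y. \<Sum>s\<in>S. f s y" i] by simp
qed simp

lemma pd_cong_open:
  assumes "open U" "x \<in> U" "\<And>y. y \<in> U \<Longrightarrow> f y = g y"
  shows "pd i f x = pd i g x"
proof -
  obtain e where e: "e > 0" "ball x e \<subseteq> U"
    using assms(1,2) open_contains_ball by blast
  have "\<forall>\<^sub>F t in nhds (0::real). t \<in> ball 0 e"
    using e(1) by (intro eventually_nhds_in_open) auto
  then have "\<forall>\<^sub>F t in nhds 0. f (x + t *\<^sub>R axis i 1) = g (x + t *\<^sub>R axis i 1)"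
  proof eventually_elim
    case (elim t)
    then have "x + t *\<^sub>R axis i 1 \<in> U" using e(2) by (auto simp: dist_norm)
    then show ?case by (rule assms(3))
  qed
  then show ?thesis unfolding pd_def by (rule deriv_cong_ev) simp
qed

fun differentiable_upto :: "nat \<Rightarrow> (real^'n::finite) set \<Rightarrow> (real^'n \<Rightarrow> real) \<Rightarrow> bool" where
  "differentiable_upto 0 U f \<longleftrightarrow> (\<forall>x\<in>U. f differentiable (at x))"
| "differentiable_upto (Suc n) U f \<longleftrightarrow>
     (\<forall>x\<in>U. f differentiable (at x)) \<and> (\<forall>i. differentiable_upto n U (pd i f))"

lemma differentiable_upto_imp_differentiable:
  "differentiable_upto n U f \<Longrightarrow> x \<in> U \<Longrightarrow> f differentiable (at x)"
  by (cases n) auto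

lemma differentiable_upto_Suc_imp: "differentiable_upto (Suc n) U f \<Longrightarrow> differentiable_upto n U f"
  by (induction n arbitrary: f) auto

lemma differentiable_upto_iff:
  "differentiable_upto n U f \<longleftrightarrow>
     (\<forall>is::'n::finite list. length is \<le> n \<longrightarrow> (\<forall>x\<in>U. foldr pd is f differentiable (at x)))"
proof (induction n arbitrary: f)
  case (Suc n)
  have "(\<forall>is::'n list. length is \<le> Suc n \<longrightarrow> (\<forall>x\<in>U. foldr pd is f differentiable (at x))) \<longleftrightarrow>
      (\<forall>x\<in>U. f differentiable (at x)) \<and>
      (\<forall>i. \<forall>is::'n list. length is \<le> n \<longrightarrow> (\<forall>x\<in>U. foldr pd (is @ [i]) f differentiable (at x)))"
    by (metis (no_types, lifting) foldr.simps(1) id_apply le0 length_append_singleton list.size(3)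
        not_less_eq_eq rev_exhaust)
  then show ?case using Suc by simp
qed simp

lemma smooth_on_iff_differentiable_upto:
  fixes U :: "(real^'n::finite) set"
  shows "smooth_on U f \<longleftrightarrow> (\<forall>n. differentiable_upto n U f)"
proof -
  have "continuous_on U h" if "\<forall>x\<in>U. h differentiable (at x)" for h :: "real^'n \<Rightarrow> real"
    using that by (meson continuous_at_imp_continuous_on differentiable_imp_continuous_within)
  then show ?thesis
    unfolding smooth_on_def differentiable_upto_iff by blast
qed

lemma differentiable_upto_const:
  fixes U :: "(real^'n::finite) set"
  shows "differentiable_upto n U (\<lambda>y. c)"
proof (induction n arbitrary: c)
  case (Suc n)
  have "pd i (\<lambda>y. c) = (\<lambda>y::real^'n. 0)" for i :: 'n by (rule ext) simp
  then show ?case using Suc.IH by simp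
qed simp

context
  fixes U :: "(real^'n::finite) set"
  assumes open_U: "open U"
begin

lemma differentiable_at_cong_open:
  assumes "\<And>y. y \<in> U \<Longrightarrow> f y = g y" "x \<in> U" "f differentiable (at x)"
  shows "g differentiable (at x)"
proof -
  obtain f' where "(f has_derivative f') (at x)"
    using assms(3) by (auto simp: differentiable_def)
  then have "(g has_derivative f') (at x)"
    by (rule has_derivative_transform_within_open[OF _ open_U assms(2,1)])
  then show ?thesis by (auto simp: differentiable_def)
qed

lemma differentiable_upto_cong:
  assumes "\<And>y. y \<in> U \<Longrightarrow> f y = g y" "differentiable_upto n U f"
  shows "differentiable_upto n U g"
  using assms
proof (induction n arbitrary: f g)
  case 0
  then show ?case using differentiable_at_cong_open[OF "0.prems"(1)] by simp
next
  case (Suc n)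
  have "differentiable_upto n U (pd i g)" for i
  proof (rule Suc.IH)
    show "pd i f y = pd i g y" if "y \<in> U" for y
      using pd_cong_open[OF open_U that Suc.prems(1)] .
    show "differentiable_upto n U (pd i f)"
      using Suc.prems(2) by simp
  qed
  moreover have "g differentiable (at x)" if "x \<in> U" for x
    using Suc.prems that by (auto intro: differentiable_at_cong_open[OF Suc.prems(1)])
  ultimately show ?case by simp
qed

lemma differentiable_upto_add:
  "differentiable_upto n U f \<Longrightarrow> differentiable_upto n U g \<Longrightarrow> differentiable_upto n U (\<lambda>y. f y + g y)"
proof (induction n arbitrary: f g)
  case (Suc n)
  have "differentiable_upto n U (pd i (\<lambda>y. f y + g y))" for i
  proof (rule differentiable_upto_cong)
    show "differentiable_upto n U (\<lambda>y. pd i f y + pd i g y)"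
      using Suc by simp
    show "pd i f y + pd i g y = pd i (\<lambda>y. f y + g y) y" if "y \<in> U" for y
      using Suc.prems that by (simp add: pd_add)
  qed
  then show ?case using Suc.prems by auto
qed auto

lemma differentiable_upto_mult:
  "differentiable_upto n U f \<Longrightarrow> differentiable_upto n U g \<Longrightarrow> differentiable_upto n U (\<lambda>y. f y * g y)"
proof (induction n arbitrary: f g)
  case (Suc n)
  have "differentiable_upto n U (pd i (\<lambda>y. f y * g y))" for i
  proof (rule differentiable_upto_cong)
    have "differentiable_upto n U f" "differentiable_upto n U g"
      using Suc.prems differentiable_upto_Suc_imp by blast+
    then show "differentiable_upto n U (\<lambda>y. pd i f y * g y + f y * pd i g y)"
      using Suc by (simp add: differentiable_upto_add)
    show "pd i f y * g y + f y * pd i g y = pd i (\<lambda>y. f y * g y) y" if "y \<in> U" for y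
      using Suc.prems that by (simp add: pd_mult)
  qed
  then show ?case using Suc.prems by auto
qed auto

lemma differentiable_upto_inverse:
  assumes "\<And>y. y \<in> U \<Longrightarrow> h y \<noteq> 0"
  shows "differentiable_upto n U h \<Longrightarrow> differentiable_upto n U (\<lambda>y. 1 / h y)"
proof (induction n)
  case 0 then show ?case using assms by auto
next
  case (Suc n)
  have IH: "differentiable_upto n U (\<lambda>y. 1 / h y)"
    using Suc differentiable_upto_Suc_imp by blast
  have "differentiable_upto n U (pd i (\<lambda>y. 1 / h y))" for i
  proof (rule differentiable_upto_cong)
    show "differentiable_upto n U (\<lambda>y. - 1 * (pd i h y * (1 / h y * (1 / h y))))"
      using Suc.prems IH by (simp only: differentiable_upto_mult differentiable_upto_const
          differentiable_upto.simps(2))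
    show "- 1 * (pd i h y * (1 / h y * (1 / h y))) = pd i (\<lambda>y. 1 / h y) y" if "y \<in> U" for y
      using Suc.prems that assms by (simp add: pd_inverse power2_eq_square)
  qed
  then show ?case
    using IH differentiable_upto_imp_differentiable by (metis differentiable_upto.simps)
qed

lemma differentiable_upto_sum:
  "finite S \<Longrightarrow> (\<And>s. s \<in> S \<Longrightarrow> differentiable_upto n U (f s)) \<Longrightarrow>
    differentiable_upto n U (\<lambda>y. \<Sum>s\<in>S. f s y)"
  by (induction S rule: finite_induct) (auto simp: differentiable_upto_const differentiable_upto_add)

lemma differentiable_upto_prod:
  "finite S \<Longrightarrow> (\<And>s. s \<in> S \<Longrightarrow> differentiable_upto n U (f s)) \<Longrightarrow>
    differentiable_upto n U (\<lambda>y. \<Prod>s\<in>S. f s y)"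
  by (induction S rule: finite_induct) (auto simp: differentiable_upto_const differentiable_upto_mult)

lemma smooth_on_const: "smooth_on U (\<lambda>y. c)"
  by (simp add: smooth_on_iff_differentiable_upto differentiable_upto_const)

lemma smooth_on_add: "smooth_on U f \<Longrightarrow> smooth_on U g \<Longrightarrow> smooth_on U (\<lambda>y. f y + g y)"
  by (simp add: smooth_on_iff_differentiable_upto differentiable_upto_add)

lemma smooth_on_mult: "smooth_on U f \<Longrightarrow> smooth_on U g \<Longrightarrow> smooth_on U (\<lambda>y. f y * g y)"
  by (simp add: smooth_on_iff_differentiable_upto differentiable_upto_mult)

lemma smooth_on_uminus: "smooth_on U f \<Longrightarrow> smooth_on U (\<lambda>y. - f y)"
  using smooth_on_mult[OF smooth_on_const[of "- 1"]] by simp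

lemma smooth_on_diff: "smooth_on U f \<Longrightarrow> smooth_on U g \<Longrightarrow> smooth_on U (\<lambda>y. f y - g y)"
  using smooth_on_add[OF _ smooth_on_uminus] by simp

lemma smooth_on_inverse: "smooth_on U h \<Longrightarrow> (\<And>y. y \<in> U \<Longrightarrow> h y \<noteq> 0) \<Longrightarrow> smooth_on U (\<lambda>y. 1 / h y)"
  by (simp add: smooth_on_iff_differentiable_upto differentiable_upto_inverse)

lemma smooth_on_sum:
  "finite S \<Longrightarrow> (\<And>s. s \<in> S \<Longrightarrow> smooth_on U (f s)) \<Longrightarrow> smooth_on U (\<lambda>y. \<Sum>s\<in>S. f s y)"
  by (simp add: smooth_on_iff_differentiable_upto differentiable_upto_sum)

lemma smooth_on_prod:
  "finite S \<Longrightarrow> (\<And>s. s \<in> S \<Longrightarrow> smooth_on U (f s)) \<Longrightarrow> smooth_on U (\<lambda>y. \<Prod>s\<in>S. f s y)"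
  by (simp add: smooth_on_iff_differentiable_upto differentiable_upto_prod)

lemma smooth_on_cong: "(\<And>y. y \<in> U \<Longrightarrow> f y = g y) \<Longrightarrow> smooth_on U f \<Longrightarrow> smooth_on U g"
  unfolding smooth_on_iff_differentiable_upto using differentiable_upto_cong by blast

end

lemma smooth_on_pd: "smooth_on U f \<Longrightarrow> smooth_on U (pd i f)"
  by (metis smooth_on_iff_differentiable_upto differentiable_upto.simps(2))

lemma smooth_on_imp_continuous_on: "smooth_on U f \<Longrightarrow> continuous_on U f"
  by (auto simp: smooth_on_def dest: spec[of _ "[]"])

lemma smooth_on_imp_differentiable: "smooth_on U f \<Longrightarrow> x \<in> U \<Longrightarrow> f differentiable (at x)"
  by (auto simp: smooth_on_def dest: spec[of _ "[]"])

section \<open>Symmetry of mixed partial derivatives\<close>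

lemma second_difference_mean_value:
  fixes f :: "real^'n::finite \<Rightarrow> real"
  assumes h: "h > 0"
    and diff: "\<And>y. norm (y - x) < 3 * h \<Longrightarrow> f differentiable (at y)"
  obtains \<xi> where "0 < \<xi>" "\<xi> < h"
    "f (x + h *\<^sub>R axis i 1 + h *\<^sub>R axis j 1) - f (x + h *\<^sub>R axis i 1) - f (x + h *\<^sub>R axis j 1) + f x
       = h * (pd i f (x + h *\<^sub>R axis j 1 + \<xi> *\<^sub>R axis i 1) - pd i f (x + \<xi> *\<^sub>R axis i 1))"
proof -
  let ?u = "axis i 1 :: real^'n" and ?v = "axis j 1 :: real^'n"
  define \<phi> where "\<phi> t = f (x + h *\<^sub>R ?v + t *\<^sub>R ?u) - f (x + t *\<^sub>R ?u)" for t
  define D where "D t = pd i f (x + h *\<^sub>R ?v + t *\<^sub>R ?u) - pd i f (x + t *\<^sub>R ?u)" for t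
  have "(\<phi> has_real_derivative D t) (at t)" if "0 \<le> t" "t \<le> h" for t
  proof -
    have "norm (h *\<^sub>R ?v + t *\<^sub>R ?u) \<le> norm (h *\<^sub>R ?v) + norm (t *\<^sub>R ?u)"
      by (rule norm_triangle_ineq)
    then have "norm ((x + h *\<^sub>R ?v + t *\<^sub>R ?u) - x) < 3 * h"
      using h that by (simp add: add.assoc)
    moreover have "norm ((x + t *\<^sub>R ?u) - x) < 3 * h"
      using h that by simp
    ultimately show ?thesis
      unfolding \<phi>_def D_def using diff
      by (intro DERIV_diff pd_has_real_derivative_along_axis) (simp_all add: add.assoc)
  qed
  then obtain \<xi> where "0 < \<xi>" "\<xi> < h" "\<phi> h - \<phi> 0 = h * D \<xi>"
    using MVT2[OF h, of \<phi> D] by auto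
  moreover have "\<phi> h - \<phi> 0 = f (x + h *\<^sub>R ?u + h *\<^sub>R ?v) - f (x + h *\<^sub>R ?u) - f (x + h *\<^sub>R ?v) + f x"
    unfolding \<phi>_def by (simp add: algebra_simps)
  ultimately show ?thesis using that unfolding D_def by simp
qed

lemma second_difference_estimate:
  fixes f :: "real^'n::finite \<Rightarrow> real"
  assumes h: "h > 0"
    and diff: "\<And>y. norm (y - x) < 3 * h \<Longrightarrow> f differentiable (at y)"
    and lin: "linear Di"
    and est: "\<And>y. norm (y - x) < 3 * h \<Longrightarrow> \<bar>pd i f y - pd i f x - Di (y - x)\<bar> \<le> e * norm (y - x)"
  shows "\<bar>f (x + h *\<^sub>R axis i 1 + h *\<^sub>R axis j 1) - f (x + h *\<^sub>R axis i 1) - f (x + h *\<^sub>R axis j 1) + f x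
          - h\<^sup>2 * Di (axis j 1)\<bar> \<le> 3 * e * h\<^sup>2"
proof -
  let ?u = "axis i 1 :: real^'n" and ?v = "axis j 1 :: real^'n"
  obtain \<xi> where \<xi>: "0 < \<xi>" "\<xi> < h" and mv:
    "f (x + h *\<^sub>R ?u + h *\<^sub>R ?v) - f (x + h *\<^sub>R ?u) - f (x + h *\<^sub>R ?v) + f x
       = h * (pd i f (x + h *\<^sub>R ?v + \<xi> *\<^sub>R ?u) - pd i f (x + \<xi> *\<^sub>R ?u))"
    using second_difference_mean_value[OF h diff] by blast
  let ?p = "x + h *\<^sub>R ?v + \<xi> *\<^sub>R ?u" and ?q = "x + \<xi> *\<^sub>R ?u"
  have "0 \<le> e * h"
    using est[of "x + h *\<^sub>R ?u"] h by (simp add: abs_le_iff)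
  then have e: "e \<ge> 0"
    using h by (simp add: zero_le_mult_iff)
  have "norm (h *\<^sub>R ?v + \<xi> *\<^sub>R ?u) \<le> norm (h *\<^sub>R ?v) + norm (\<xi> *\<^sub>R ?u)"
    by (rule norm_triangle_ineq)
  then have np: "norm (?p - x) \<le> h + \<xi>"
    using h \<xi> by (simp add: add.assoc)
  have "\<bar>pd i f ?p - pd i f x - Di (?p - x)\<bar> \<le> e * (h + \<xi>)"
    using est[of ?p] np \<xi> mult_left_mono[OF np e] by linarith
  moreover have "\<bar>pd i f ?q - pd i f x - Di (?q - x)\<bar> \<le> e * \<xi>"
    using est[of ?q] \<xi> by simp
  moreover have "Di (?p - x) - Di (?q - x) = h * Di ?v"
    using lin by (simp add: add.assoc linear_add linear_cmul)
  moreover have "e * (h + \<xi>) + e * \<xi> \<le> e * (3 * h)"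
    using \<xi> e by (simp add: mult_left_mono flip: distrib_left)
  ultimately have "\<bar>pd i f ?p - pd i f ?q - h * Di ?v\<bar> \<le> e * (3 * h)"
    by linarith
  then have "h * \<bar>pd i f ?p - pd i f ?q - h * Di ?v\<bar> \<le> h * (e * (3 * h))"
    using h by (simp add: mult_left_mono)
  moreover have "\<bar>f (x + h *\<^sub>R ?u + h *\<^sub>R ?v) - f (x + h *\<^sub>R ?u) - f (x + h *\<^sub>R ?v) + f x
      - h\<^sup>2 * Di ?v\<bar> = h * \<bar>pd i f ?p - pd i f ?q - h * Di ?v\<bar>"
    unfolding mv using h by (simp add: abs_mult power2_eq_square mult.assoc flip: right_diff_distrib)
  ultimately show ?thesis
    by (simp add: power2_eq_square mult.commute mult.left_commute)
qed

lemma frechet_mixed_partials_close: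
  fixes f :: "real^'n::finite \<Rightarrow> real"
  assumes U: "open U" "x \<in> U" and diff: "\<And>y. y \<in> U \<Longrightarrow> f differentiable (at y)"
    and Di: "(pd i f has_derivative Di) (at x)" and Dj: "(pd j f has_derivative Dj) (at x)"
    and e: "e > 0"
  shows "\<bar>Di (axis j 1) - Dj (axis i 1)\<bar> \<le> 6 * e"
proof -
  obtain d1 where d1: "d1 > 0"
    "\<And>y. norm (y - x) < d1 \<Longrightarrow> norm (pd i f y - pd i f x - Di (y - x)) \<le> e * norm (y - x)"
    using Di e unfolding has_derivative_at_alt by blast
  obtain d2 where d2: "d2 > 0"
    "\<And>y. norm (y - x) < d2 \<Longrightarrow> norm (pd j f y - pd j f x - Dj (y - x)) \<le> e * norm (y - x)"
    using Dj e unfolding has_derivative_at_alt by blast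
  obtain r where r: "r > 0" "ball x r \<subseteq> U" using U open_contains_ball by blast
  define h where "h = min (min d1 d2) r / 3"
  have h: "h > 0" using d1 d2 r by (simp add: h_def)
  have diff_h: "f differentiable (at y)" if "norm (y - x) < 3 * h" for y
    using that r diff by (auto simp: h_def dist_norm norm_minus_commute)
  have A: "\<bar>f (x + h *\<^sub>R axis i 1 + h *\<^sub>R axis j 1) - f (x + h *\<^sub>R axis i 1) - f (x + h *\<^sub>R axis j 1)
      + f x - h\<^sup>2 * Di (axis j 1)\<bar> \<le> 3 * e * h\<^sup>2"
    by (rule second_difference_estimate[OF h diff_h has_derivative_linear[OF Di]])
      (use d1 in \<open>auto simp: h_def\<close>)
  have B: "\<bar>f (x + h *\<^sub>R axis j 1 + h *\<^sub>R axis i 1) - f (x + h *\<^sub>R axis j 1) - f (x + h *\<^sub>R axis i 1)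
      + f x - h\<^sup>2 * Dj (axis i 1)\<bar> \<le> 3 * e * h\<^sup>2"
    by (rule second_difference_estimate[OF h diff_h has_derivative_linear[OF Dj]])
      (use d2 in \<open>auto simp: h_def\<close>)
  have swap: "x + h *\<^sub>R axis j 1 + h *\<^sub>R axis i 1 = x + h *\<^sub>R axis i 1 + h *\<^sub>R axis j 1"
    by (simp add: algebra_simps)
  have "\<bar>h\<^sup>2 * Di (axis j 1) - h\<^sup>2 * Dj (axis i 1)\<bar> \<le> 6 * e * h\<^sup>2"
    using A B[unfolded swap] by linarith
  moreover have "\<bar>h\<^sup>2 * Di (axis j 1) - h\<^sup>2 * Dj (axis i 1)\<bar> = h\<^sup>2 * \<bar>Di (axis j 1) - Dj (axis i 1)\<bar>"
    by (simp add: abs_mult flip: right_diff_distrib)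
  ultimately have "h\<^sup>2 * \<bar>Di (axis j 1) - Dj (axis i 1)\<bar> \<le> h\<^sup>2 * (6 * e)"
    by (simp add: mult.commute mult.left_commute)
  then show ?thesis using h by simp
qed

lemma pd_commute:
  fixes f :: "real^'n::finite \<Rightarrow> real"
  assumes U: "open U" "x \<in> U" and diff: "\<And>y. y \<in> U \<Longrightarrow> f differentiable (at y)"
    and di: "pd i f differentiable (at x)" and dj: "pd j f differentiable (at x)"
  shows "pd j (pd i f) x = pd i (pd j f) x"
proof -
  obtain Di where Di: "(pd i f has_derivative Di) (at x)" using di differentiable_def by blast
  obtain Dj where Dj: "(pd j f has_derivative Dj) (at x)" using dj differentiable_def by blast
  have "\<bar>Di (axis j 1) - Dj (axis i 1)\<bar> \<le> 0"
  proof (rule field_le_epsilon)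
    fix e :: real assume "e > 0"
    then show "\<bar>Di (axis j 1) - Dj (axis i 1)\<bar> \<le> 0 + e"
      using frechet_mixed_partials_close[OF U diff Di Dj, of "e / 6"] by simp
  qed
  then show ?thesis using pd_eq_frechet[OF Di] pd_eq_frechet[OF Dj] by simp
qed

lemma smooth_on_pd_commute:
  assumes "open U" "x \<in> U" "smooth_on U f"
  shows "pd j (pd i f) x = pd i (pd j f) x"
  using pd_commute[OF assms(1,2)] assms smooth_on_imp_differentiable smooth_on_pd by blast

section \<open>Riemannian metrics in a chart\<close>

lemmas if_mult_distrib = if_distrib[of "\<lambda>z. z * _"] if_distrib[of "\<lambda>z. _ * z"]

lemma smooth_on_det:
  assumes "open U" "\<And>r c. smooth_on U (\<lambda>x. M x $ r $ c)"
  shows "smooth_on U (\<lambda>x. det (M x))"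
  unfolding det_def using assms(1)
  by (intro smooth_on_sum smooth_on_mult smooth_on_const smooth_on_prod assms(2)) auto

lemma posdef_imp_invertible:
  fixes A :: "real^'n::finite^'n"
  assumes "\<And>v. v \<noteq> 0 \<Longrightarrow> (\<Sum>i\<in>UNIV. \<Sum>j\<in>UNIV. A $ i $ j * v $ i * v $ j) > 0"
  shows "invertible A"
proof -
  have "v = 0" if "A *v v = 0" for v
  proof (rule ccontr)
    assume "v \<noteq> 0"
    moreover have "(\<Sum>i\<in>UNIV. \<Sum>j\<in>UNIV. A $ i $ j * v $ i * v $ j) = (\<Sum>i\<in>UNIV. v $ i * (A *v v) $ i)"
      by (simp add: matrix_vector_mult_def sum_distrib_left algebra_simps)
    ultimately show False using that assms by fastforce
  qed
  then obtain B where "B ** A = mat 1" using matrix_left_invertible_ker by blast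
  then show ?thesis
    unfolding invertible_def using matrix_left_right_inverse by blast
qed

lemma matrix_inv_inverse:
  fixes A :: "real^'n::finite^'n"
  assumes "invertible A"
  shows "A ** matrix_inv A = mat 1" "matrix_inv A ** A = mat 1"
proof -
  have "\<exists>B. A ** B = mat 1 \<and> B ** A = mat 1" using assms unfolding invertible_def by blast
  then have "A ** matrix_inv A = mat 1 \<and> matrix_inv A ** A = mat 1"
    unfolding matrix_inv_def by (rule someI_ex)
  then show "A ** matrix_inv A = mat 1" "matrix_inv A ** A = mat 1" by auto
qed

lemma matrix_inv_cramer:
  fixes A :: "real^'n::finite^'n"
  assumes "invertible A"
  shows "matrix_inv A $ i $ j = det (\<chi> r c. if c = i then axis j 1 $ r else A $ r $ c) / det A"
proof -
  have "A *v (\<chi> r. matrix_inv A $ r $ j) = axis j 1"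
    using matrix_inv_inverse(1)[OF assms]
    by (simp add: vec_eq_iff matrix_vector_mult_def matrix_matrix_mult_def axis_def mat_def)
  then show ?thesis
    using cramer[OF invertible_det_nz[THEN iffD1, OF assms]] by (simp add: vec_eq_iff)
qed

lemma algebraic_curvature_pair_symmetric:
  fixes R :: "'a \<Rightarrow> 'a \<Rightarrow> 'a \<Rightarrow> 'a \<Rightarrow> real"
  assumes antisym12: "\<And>a b c d. R a b c d = - R b a c d"
    and antisym34: "\<And>a b c d. R a b c d = - R a b d c"
    and bianchi: "\<And>a b c d. R a b c d + R b c a d + R c a b d = 0"
  shows "R a b c d = R c d a b"
proof -
  have "R a b c d + R b c a d + R c a b d = 0" "R b c d a + R c d b a + R d b c a = 0"
    "R c d a b + R d a c b + R a c d b = 0" "R d a b c + R a b d c + R b d a c = 0"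
    by (rule bianchi)+
  moreover have "R b c a d = - R b c d a" "R c a b d = - R a c b d" "R a c b d = - R a c d b"
    "R c d b a = - R c d a b" "R d b c a = - R b d c a" "R b d c a = - R b d a c"
    "R d a c b = - R a d c b" "R a d c b = - R a d b c" "R d a b c = - R a d b c" "R a b d c = - R a b c d"
    using antisym12 antisym34 by blast+
  ultimately show ?thesis by linarith
qed

locale riemannian_chart =
  fixes U :: "(real^'n::finite) set" and g :: "real^'n \<Rightarrow> real^'n^'n"
  assumes riemannian_metric: "riemannian_metric_on U g"
begin

lemma open_U: "open U"
  using riemannian_metric unfolding riemannian_metric_on_def by blast

lemma metric_symmetric: "x \<in> U \<Longrightarrow> g x $ i $ j = g x $ j $ i"
  using riemannian_metric unfolding riemannian_metric_on_def by blast

lemma metric_pos: "x \<in> U \<Longrightarrow> v \<noteq> 0 \<Longrightarrow> (\<Sum>i\<in>UNIV. \<Sum>j\<in>UNIV. g x $ i $ j * v $ i * v $ j) > 0"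
  using riemannian_metric unfolding riemannian_metric_on_def by blast

lemma metric_diagonal_pos:
  assumes "x \<in> U"
  shows "g x $ i $ i > 0"
proof -
  have "(\<Sum>p\<in>UNIV. \<Sum>q\<in>UNIV. g x $ p $ q * axis i 1 $ p * axis i 1 $ q) > 0"
    by (rule metric_pos) (simp_all add: assms)
  then show ?thesis
    by (simp add: axis_def if_mult_distrib cong: if_cong)
qed

lemma metric_invertible: "x \<in> U \<Longrightarrow> invertible (g x)"
  using metric_pos by (intro posdef_imp_invertible) blast

lemma metric_ginv: "x \<in> U \<Longrightarrow> (\<Sum>l\<in>UNIV. g x $ i $ l * ginv g l k x) = (if i = k then 1 else 0)"
  using matrix_inv_inverse(1)[OF metric_invertible, of x]
  by (simp add: vec_eq_iff matrix_matrix_mult_def mat_def ginv_def)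

lemma ginv_metric: "x \<in> U \<Longrightarrow> (\<Sum>l\<in>UNIV. ginv g i l x * g x $ l $ k) = (if i = k then 1 else 0)"
  using matrix_inv_inverse(2)[OF metric_invertible, of x]
  by (simp add: vec_eq_iff matrix_matrix_mult_def mat_def ginv_def)

lemma trace_ginv_metric: "x \<in> U \<Longrightarrow> (\<Sum>i\<in>UNIV. \<Sum>j\<in>UNIV. ginv g i j x * g x $ i $ j) = real CARD('n)"
  using ginv_metric[of x] metric_symmetric[of x] by simp

lemma smooth_metric [simp]: "smooth_on U (\<lambda>x. g x $ i $ j)"
  using riemannian_metric unfolding riemannian_metric_on_def by blast

lemma smooth_ginv [simp]: "smooth_on U (ginv g i j)"
proof -
  have "smooth_on U (\<lambda>x. (\<chi> r c. if c = i then axis j 1 $ r else g x $ r $ c) $ r $ c)" for r c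
    by (cases "c = i") (simp_all add: open_U smooth_on_const)
  then have cramer: "smooth_on U (\<lambda>x. det (\<chi> r c. if c = i then axis j 1 $ r else g x $ r $ c) * (1 / det (g x)))"
    using open_U metric_invertible invertible_det_nz
    by (intro smooth_on_mult smooth_on_inverse smooth_on_det) auto
  show ?thesis
    by (rule smooth_on_cong[OF open_U _ cramer]) (simp add: ginv_def matrix_inv_cramer[OF metric_invertible])
qed

lemma smooth_const [simp]: "smooth_on U (\<lambda>y. c)"
  using open_U by (rule smooth_on_const)

lemma smooth_add [simp]: "smooth_on U f \<Longrightarrow> smooth_on U h \<Longrightarrow> smooth_on U (\<lambda>y. f y + h y)"
  using open_U by (rule smooth_on_add)

lemma smooth_diff [simp]: "smooth_on U f \<Longrightarrow> smooth_on U h \<Longrightarrow> smooth_on U (\<lambda>y. f y - h y)"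
  using open_U by (rule smooth_on_diff)

lemma smooth_mult [simp]: "smooth_on U f \<Longrightarrow> smooth_on U h \<Longrightarrow> smooth_on U (\<lambda>y. f y * h y)"
  using open_U by (rule smooth_on_mult)

lemma smooth_sum [simp]: "(\<And>s. smooth_on U (f s)) \<Longrightarrow> smooth_on U (\<lambda>y. \<Sum>s\<in>(UNIV::'n set). f s y)"
  using open_U by (rule smooth_on_sum) auto

lemma smooth_pd [simp]: "smooth_on U f \<Longrightarrow> smooth_on U (pd i f)"
  by (rule smooth_on_pd)

lemma pd_add_smooth [simp]:
  "x \<in> U \<Longrightarrow> smooth_on U f \<Longrightarrow> smooth_on U h \<Longrightarrow> pd i (\<lambda>y. f y + h y) x = pd i f x + pd i h x"
  by (rule pd_add) (auto intro: smooth_on_imp_differentiable)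

lemma pd_diff_smooth [simp]:
  "x \<in> U \<Longrightarrow> smooth_on U f \<Longrightarrow> smooth_on U h \<Longrightarrow> pd i (\<lambda>y. f y - h y) x = pd i f x - pd i h x"
  by (rule pd_diff) (auto intro: smooth_on_imp_differentiable)

lemma pd_mult_smooth [simp]:
  "x \<in> U \<Longrightarrow> smooth_on U f \<Longrightarrow> smooth_on U h \<Longrightarrow> pd i (\<lambda>y. f y * h y) x = pd i f x * h x + f x * pd i h x"
  by (rule pd_mult) (auto intro: smooth_on_imp_differentiable)

lemma pd_sum_smooth [simp]:
  "x \<in> U \<Longrightarrow> (\<And>s. smooth_on U (f s)) \<Longrightarrow> pd i (\<lambda>y. \<Sum>s\<in>(UNIV::'n set). f s y) x = (\<Sum>s\<in>UNIV. pd i (f s) x)"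
  by (rule pd_sum) (auto intro: smooth_on_imp_differentiable)

abbreviation Gamma :: "'n \<Rightarrow> 'n \<Rightarrow> 'n \<Rightarrow> real^'n \<Rightarrow> real" ("\<Gamma>") where
  "\<Gamma> k i j \<equiv> christoffel g k i j"

abbreviation dg :: "'n \<Rightarrow> 'n \<Rightarrow> 'n \<Rightarrow> real^'n \<Rightarrow> real" where
  "dg m i j \<equiv> pd m (\<lambda>y. g y $ i $ j)"

lemma dg_symmetric: "x \<in> U \<Longrightarrow> dg m i j x = dg m j i x"
  using open_U by (rule pd_cong_open) (auto simp: metric_symmetric)

lemma smooth_christoffel [simp]: "smooth_on U (\<Gamma> k i j)"
  unfolding christoffel_def
  by (intro smooth_mult smooth_const smooth_sum smooth_add smooth_diff smooth_ginv smooth_pd smooth_metric)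

lemma christoffel_symmetric: "x \<in> U \<Longrightarrow> \<Gamma> k i j x = \<Gamma> k j i x"
  unfolding christoffel_def using dg_symmetric by (simp add: algebra_simps)

lemma pd_christoffel_symmetric: "x \<in> U \<Longrightarrow> pd m (\<Gamma> k i j) x = pd m (\<Gamma> k j i) x"
  using open_U by (rule pd_cong_open) (auto simp: christoffel_symmetric)

lemma christoffel_lowered:
  assumes x: "x \<in> U"
  shows "(\<Sum>k\<in>UNIV. g x $ l $ k * \<Gamma> k i j x) = (1/2) * (dg i j l x + dg j i l x - dg l i j x)"
proof -
  have "(\<Sum>k\<in>UNIV. g x $ l $ k * \<Gamma> k i j x)
      = (1/2) * (\<Sum>k\<in>UNIV. \<Sum>p\<in>UNIV. g x $ l $ k * ginv g k p x * (dg i j p x + dg j i p x - dg p i j x))"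
    unfolding christoffel_def by (simp add: sum_distrib_left algebra_simps)
  also have "\<dots> = (1/2) * (\<Sum>p\<in>UNIV. (\<Sum>k\<in>UNIV. g x $ l $ k * ginv g k p x) * (dg i j p x + dg j i p x - dg p i j x))"
    by (subst sum.swap) (simp add: sum_distrib_right)
  also have "\<dots> = (1/2) * (dg i j l x + dg j i l x - dg l i j x)"
    by (simp add: metric_ginv[OF x] if_mult_distrib cong: if_cong)
  finally show ?thesis .
qed

lemma metric_compatibility:
  assumes x: "x \<in> U"
  shows "dg m i j x = (\<Sum>l\<in>UNIV. g x $ l $ j * \<Gamma> l m i x + g x $ i $ l * \<Gamma> l m j x)"
  using christoffel_lowered[OF x, of j m i] christoffel_lowered[OF x, of i m j] dg_symmetric[OF x, of m i j]
  by (simp add: sum.distrib metric_symmetric[OF x, of _ j] algebra_simps)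

text \<open>\<open>riemann k i j m\<close> is the component \<open>R\<^sup>k\<^sub>m\<^sub>i\<^sub>j\<close> of \<open>R(\<partial>\<^sub>i, \<partial>\<^sub>j) \<partial>\<^sub>m\<close>; in these terms
  \<open>ricci g i j = R\<^sup>k\<^sub>i\<^sub>k\<^sub>j\<close>.\<close>
definition riemann :: "'n \<Rightarrow> 'n \<Rightarrow> 'n \<Rightarrow> 'n \<Rightarrow> real^'n \<Rightarrow> real" where
  "riemann k i j m x = pd i (\<Gamma> k j m) x - pd j (\<Gamma> k i m) x
     + (\<Sum>l\<in>UNIV. \<Gamma> k i l x * \<Gamma> l j m x - \<Gamma> k j l x * \<Gamma> l i m x)"

definition riemann_lowered :: "'n \<Rightarrow> 'n \<Rightarrow> 'n \<Rightarrow> 'n \<Rightarrow> real^'n \<Rightarrow> real" where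
  "riemann_lowered i j m d x = (\<Sum>k\<in>UNIV. g x $ d $ k * riemann k i j m x)"

lemma riemann_antisym: "riemann k i j m x = - riemann k j i m x"
  unfolding riemann_def by (simp add: sum_subtractf algebra_simps)

lemma riemann_bianchi:
  assumes x: "x \<in> U"
  shows "riemann k i j m x + riemann k j m i x + riemann k m i j x = 0"
proof -
  have "(\<Sum>l\<in>UNIV. \<Gamma> k i l x * \<Gamma> l j m x - \<Gamma> k j l x * \<Gamma> l i m x)
      + (\<Sum>l\<in>UNIV. \<Gamma> k j l x * \<Gamma> l m i x - \<Gamma> k m l x * \<Gamma> l j i x)
      + (\<Sum>l\<in>UNIV. \<Gamma> k m l x * \<Gamma> l i j x - \<Gamma> k i l x * \<Gamma> l m j x) = 0"
    by (simp add: christoffel_symmetric[OF x, of _ i j] christoffel_symmetric[OF x, of _ j m]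
        christoffel_symmetric[OF x, of _ m i] flip: sum.distrib)
  moreover have "pd i (\<Gamma> k j m) x = pd i (\<Gamma> k m j) x" "pd j (\<Gamma> k m i) x = pd j (\<Gamma> k i m) x"
    "pd m (\<Gamma> k i j) x = pd m (\<Gamma> k j i) x"
    using pd_christoffel_symmetric[OF x] by blast+
  ultimately show ?thesis
    unfolding riemann_def by linarith
qed

lemma ricci_riemann: "x \<in> U \<Longrightarrow> ricci g i j x = (\<Sum>k\<in>UNIV. riemann k k j i x)"
  unfolding ricci_def riemann_def
  by (intro sum.cong refl) (simp add: pd_christoffel_symmetric[of x _ _ i j] christoffel_symmetric[of x _ i j])

lemma riemann_raise:
  assumes x: "x \<in> U"
  shows "riemann k i j m x = (\<Sum>d\<in>UNIV. ginv g k d x * riemann_lowered i j m d x)"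
proof -
  have "(\<Sum>d\<in>UNIV. ginv g k d x * riemann_lowered i j m d x)
      = (\<Sum>d\<in>UNIV. \<Sum>q\<in>UNIV. ginv g k d x * g x $ d $ q * riemann q i j m x)"
    unfolding riemann_lowered_def by (simp add: sum_distrib_left mult.assoc)
  also have "\<dots> = (\<Sum>q\<in>UNIV. (\<Sum>d\<in>UNIV. ginv g k d x * g x $ d $ q) * riemann q i j m x)"
    by (subst sum.swap) (simp add: sum_distrib_right)
  finally show ?thesis
    by (simp add: ginv_metric[OF x] if_mult_distrib cong: if_cong)
qed

lemma riemann_lowered_expand:
  assumes x: "x \<in> U"
  shows "riemann_lowered i j m d x =
      (\<Sum>l\<in>UNIV. g x $ d $ l * pd i (\<Gamma> l j m) x) - (\<Sum>l\<in>UNIV. g x $ d $ l * pd j (\<Gamma> l i m) x)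
    + (\<Sum>l\<in>UNIV. \<Sum>p\<in>UNIV. g x $ d $ p * \<Gamma> p i l x * \<Gamma> l j m x)
    - (\<Sum>l\<in>UNIV. \<Sum>p\<in>UNIV. g x $ d $ p * \<Gamma> p j l x * \<Gamma> l i m x)"
proof -
  have "(\<Sum>p\<in>UNIV. \<Sum>l\<in>UNIV. g x $ d $ p * \<Gamma> p i l x * \<Gamma> l j m x)
      = (\<Sum>l\<in>UNIV. \<Sum>p\<in>UNIV. g x $ d $ p * \<Gamma> p i l x * \<Gamma> l j m x)"
    "(\<Sum>p\<in>UNIV. \<Sum>l\<in>UNIV. g x $ d $ p * \<Gamma> p j l x * \<Gamma> l i m x)
      = (\<Sum>l\<in>UNIV. \<Sum>p\<in>UNIV. g x $ d $ p * \<Gamma> p j l x * \<Gamma> l i m x)"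
    by (rule sum.swap)+
  then show ?thesis
    unfolding riemann_lowered_def riemann_def
    by (simp add: algebra_simps sum.distrib sum_subtractf sum_distrib_left)
qed

lemma pd_metric_compatibility:
  assumes x: "x \<in> U"
  shows "pd i (dg j m d) x =
      (\<Sum>l\<in>UNIV. g x $ d $ l * pd i (\<Gamma> l j m) x) + (\<Sum>l\<in>UNIV. g x $ m $ l * pd i (\<Gamma> l j d) x)
    + (\<Sum>l\<in>UNIV. \<Sum>p\<in>UNIV. g x $ d $ p * \<Gamma> p i l x * \<Gamma> l j m x)
    + (\<Sum>l\<in>UNIV. \<Sum>p\<in>UNIV. g x $ m $ p * \<Gamma> p i l x * \<Gamma> l j d x)
    + (\<Sum>l\<in>UNIV. \<Sum>p\<in>UNIV. g x $ p $ l * (\<Gamma> p i d x * \<Gamma> l j m x + \<Gamma> p i m x * \<Gamma> l j d x))"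
proof -
  have "pd i (dg j m d) x = pd i (\<lambda>y. \<Sum>l\<in>UNIV. g y $ d $ l * \<Gamma> l j m y + g y $ m $ l * \<Gamma> l j d y) x"
    using open_U x by (rule pd_cong_open) (simp add: metric_compatibility metric_symmetric[of _ _ d])
  also have "\<dots> = (\<Sum>l\<in>UNIV. dg i d l x * \<Gamma> l j m x + g x $ d $ l * pd i (\<Gamma> l j m) x
      + (dg i m l x * \<Gamma> l j d x + g x $ m $ l * pd i (\<Gamma> l j d) x))"
    using x by simp
  finally show ?thesis
    using x by (simp add: metric_compatibility sum.distrib sum_distrib_left sum_distrib_right
        metric_symmetric[of x _ d] metric_symmetric[of x _ m] algebra_simps)
qed

lemma riemann_lowered_antisym:
  assumes x: "x \<in> U"
  shows "riemann_lowered i j m d x = - riemann_lowered i j d m x"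
proof -
  have "pd i (dg j m d) x = pd j (dg i m d) x"
    using open_U x by (rule smooth_on_pd_commute) simp
  moreover have "(\<Sum>l\<in>UNIV. \<Sum>p\<in>UNIV. g x $ p $ l * (\<Gamma> p i d x * \<Gamma> l j m x + \<Gamma> p i m x * \<Gamma> l j d x))
      = (\<Sum>l\<in>UNIV. \<Sum>p\<in>UNIV. g x $ p $ l * (\<Gamma> p j d x * \<Gamma> l i m x + \<Gamma> p j m x * \<Gamma> l i d x))"
    by (subst sum.swap) (simp add: metric_symmetric[OF x] algebra_simps sum.distrib)
  ultimately show ?thesis
    using pd_metric_compatibility[OF x, of i j m d] pd_metric_compatibility[OF x, of j i m d]
      riemann_lowered_expand[OF x, of i j m d] riemann_lowered_expand[OF x, of i j d m]
    by linarith
qed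

lemma riemann_lowered_pair_symmetric:
  assumes x: "x \<in> U"
  shows "riemann_lowered i j m d x = riemann_lowered m d i j x"
proof (rule algebraic_curvature_pair_symmetric[where R = "\<lambda>a b c d. riemann_lowered a b c d x"])
  fix a b c e
  show "riemann_lowered a b c e x = - riemann_lowered b a c e x"
    unfolding riemann_lowered_def by (subst riemann_antisym) (simp add: sum_negf)
  show "riemann_lowered a b c e x = - riemann_lowered a b e c x"
    by (rule riemann_lowered_antisym[OF x])
  have "riemann_lowered a b c e x + riemann_lowered b c a e x + riemann_lowered c a b e x
      = (\<Sum>k\<in>UNIV. g x $ e $ k * (riemann k a b c x + riemann k b c a x + riemann k c a b x))"
    unfolding riemann_lowered_def by (simp add: sum.distrib algebra_simps)
  then show "riemann_lowered a b c e x + riemann_lowered b c a e x + riemann_lowered c a b e x = 0"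
    by (simp add: riemann_bianchi[OF x])
qed

end

section \<open>Naturality of the Ricci tensor\<close>

lemma sum3_swap23: "(\<Sum>a\<in>A. \<Sum>b\<in>B. \<Sum>c\<in>C. F a b c) = (\<Sum>a\<in>A. \<Sum>c\<in>C. \<Sum>b\<in>B. F a b c)"
  by (rule sum.cong[OF refl]) (rule sum.swap)

lemma sum3_rotate: "(\<Sum>a\<in>A. \<Sum>b\<in>B. \<Sum>c\<in>C. F a b c) = (\<Sum>c\<in>C. \<Sum>a\<in>A. \<Sum>b\<in>B. F a b c)"
  by (subst sum3_swap23) (rule sum.swap)

lemma sum3_swap13: "(\<Sum>a\<in>A. \<Sum>b\<in>B. \<Sum>c\<in>C. F a b c) = (\<Sum>c\<in>C. \<Sum>b\<in>B. \<Sum>a\<in>A. F a b c)"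
  by (subst sum3_rotate) (rule sum3_swap23)

text \<open>Pointwise algebra of the Ricci tensor: at a point, \<open>G k i j\<close> stands for \<open>\<Gamma>\<^sup>k\<^sub>i\<^sub>j\<close>,
  \<open>D m k i j\<close> for \<open>\<partial>\<^sub>m\<Gamma>\<^sup>k\<^sub>i\<^sub>j\<close>, and \<open>P k l\<close>, \<open>W k a b\<close>, \<open>T m a k b\<close> for \<open>\<partial>\<^sub>lV\<^sup>k\<close>,
  \<open>\<partial>\<^sub>a\<partial>\<^sub>bV\<^sup>k\<close>, \<open>\<partial>\<^sub>m\<partial>\<^sub>a\<partial>\<^sub>bV\<^sup>k\<close>. The Lie derivative of \<open>\<Gamma>\<close> along \<open>V\<close> is
  \<open>V\<^sup>m\<partial>\<^sub>m\<Gamma> - christoffel_drift\<close>; \<open>ricci_form_natural\<close> says that if it vanishes, then so does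
  the Lie derivative of the Ricci tensor.\<close>

definition ricci_form ::
  "('n::finite \<Rightarrow> 'n \<Rightarrow> 'n \<Rightarrow> real) \<Rightarrow> ('n \<Rightarrow> 'n \<Rightarrow> 'n \<Rightarrow> 'n \<Rightarrow> real) \<Rightarrow> 'n \<Rightarrow> 'n \<Rightarrow> real" where
  "ricci_form G D i j =
     (\<Sum>k\<in>UNIV. D k k i j - D j k k i + (\<Sum>p\<in>UNIV. G k k p * G p i j - G k j p * G p k i))"

definition ricci_form_variation ::
  "('n::finite \<Rightarrow> 'n \<Rightarrow> 'n \<Rightarrow> real) \<Rightarrow> ('n \<Rightarrow> 'n \<Rightarrow> 'n \<Rightarrow> real) \<Rightarrow> ('n \<Rightarrow> 'n \<Rightarrow> 'n \<Rightarrow> 'n \<Rightarrow> real) \<Rightarrow>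
     'n \<Rightarrow> 'n \<Rightarrow> real" where
  "ricci_form_variation G dG dD i j = (\<Sum>k\<in>UNIV. dD k k i j) - (\<Sum>k\<in>UNIV. dD j k k i)
     + (\<Sum>k\<in>UNIV. \<Sum>p\<in>UNIV. dG k k p * G p i j + G k k p * dG p i j - dG k j p * G p k i - G k j p * dG p k i)"

definition christoffel_drift ::
  "('n::finite \<Rightarrow> 'n \<Rightarrow> 'n \<Rightarrow> real) \<Rightarrow> ('n \<Rightarrow> 'n \<Rightarrow> real) \<Rightarrow> ('n \<Rightarrow> 'n \<Rightarrow> 'n \<Rightarrow> real) \<Rightarrow>
     'n \<Rightarrow> 'n \<Rightarrow> 'n \<Rightarrow> real" where
  "christoffel_drift G P W k i j = - W k i j + (\<Sum>l\<in>UNIV. G l i j * P k l - G k l j * P l i - G k i l * P l j)"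

definition christoffel_drift_deriv ::
  "('n::finite \<Rightarrow> 'n \<Rightarrow> 'n \<Rightarrow> real) \<Rightarrow> ('n \<Rightarrow> 'n \<Rightarrow> 'n \<Rightarrow> 'n \<Rightarrow> real) \<Rightarrow> ('n \<Rightarrow> 'n \<Rightarrow> real) \<Rightarrow>
     ('n \<Rightarrow> 'n \<Rightarrow> 'n \<Rightarrow> real) \<Rightarrow> ('n \<Rightarrow> 'n \<Rightarrow> 'n \<Rightarrow> 'n \<Rightarrow> real) \<Rightarrow> 'n \<Rightarrow> 'n \<Rightarrow> 'n \<Rightarrow> 'n \<Rightarrow> real" where
  "christoffel_drift_deriv G D P W T m k i j = - T m i k j
     + (\<Sum>l\<in>UNIV. D m l i j * P k l + G l i j * W k m l - (D m k l j * P l i + G k l j * W l m i)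
         - (D m k i l * P l j + G k i l * W l m j))"

text \<open>Expanded, \<open>ricci_form_natural\<close> is a sum of 40 monomial sums which cancel in pairs after
  reindexing; they are grouped by the derivatives of \<open>V\<close> they contain.\<close>

lemma ricci_form_natural_hessian_terms:
  fixes G W :: "'n::finite \<Rightarrow> 'n \<Rightarrow> 'n \<Rightarrow> real"
  assumes G_sym: "\<And>k a b. G k a b = G k b a" and W_sym: "\<And>k a b. W k a b = W k b a"
  shows "(\<Sum>k\<in>UNIV. \<Sum>l\<in>UNIV. G l i j * W k k l)
    - (\<Sum>k\<in>UNIV. \<Sum>l\<in>UNIV. G k l j * W l k i)
    - (\<Sum>k\<in>UNIV. \<Sum>l\<in>UNIV. G k i l * W l k j)
    - (\<Sum>k\<in>UNIV. \<Sum>l\<in>UNIV. G l k i * W k j l)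
    + (\<Sum>k\<in>UNIV. \<Sum>l\<in>UNIV. G k l i * W l j k)
    + (\<Sum>k\<in>UNIV. \<Sum>l\<in>UNIV. G k k l * W l j i)
    - (\<Sum>k\<in>UNIV. \<Sum>p\<in>UNIV. W k k p * G p i j)
    - (\<Sum>k\<in>UNIV. \<Sum>p\<in>UNIV. G k k p * W p i j)
    + (\<Sum>k\<in>UNIV. \<Sum>p\<in>UNIV. W k j p * G p k i)
    + (\<Sum>k\<in>UNIV. \<Sum>p\<in>UNIV. G k j p * W p k i)
    = 0"
proof -
  have "(\<Sum>k\<in>UNIV. \<Sum>l\<in>UNIV. G l i j * W k k l)
      = (\<Sum>k\<in>UNIV. \<Sum>p\<in>UNIV. W k k p * G p i j)"
    by (simp add: mult.commute)
  moreover have "(\<Sum>k\<in>UNIV. \<Sum>l\<in>UNIV. G k l j * W l k i)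
      = (\<Sum>k\<in>UNIV. \<Sum>p\<in>UNIV. G k j p * W p k i)"
    by (intro sum.cong refl) (simp add: G_sym[of _ j])
  moreover have "(\<Sum>k\<in>UNIV. \<Sum>l\<in>UNIV. G k i l * W l k j)
      = (\<Sum>k\<in>UNIV. \<Sum>p\<in>UNIV. W k j p * G p k i)"
    by (rule trans[OF _ sum.swap[of "\<lambda>k p. W k j p * G p k i", symmetric]]) (simp add: G_sym[of _ i] W_sym[of _ _ j] mult_ac)
  moreover have "(\<Sum>k\<in>UNIV. \<Sum>l\<in>UNIV. G l k i * W k j l)
      = (\<Sum>k\<in>UNIV. \<Sum>l\<in>UNIV. G k l i * W l j k)"
    by (rule sum.swap)
  moreover have "(\<Sum>k\<in>UNIV. \<Sum>l\<in>UNIV. G k k l * W l j i)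
      = (\<Sum>k\<in>UNIV. \<Sum>p\<in>UNIV. G k k p * W p i j)"
    by (intro sum.cong refl) (simp add: W_sym[of _ j i])
  ultimately show ?thesis by linarith
qed

lemma ricci_form_natural_christoffel_derivative_terms:
  fixes D :: "'n::finite \<Rightarrow> 'n \<Rightarrow> 'n \<Rightarrow> 'n \<Rightarrow> real" and P :: "'n \<Rightarrow> 'n \<Rightarrow> real"
  shows "(\<Sum>k\<in>UNIV. \<Sum>l\<in>UNIV. D k l i j * P k l)
    - (\<Sum>k\<in>UNIV. \<Sum>l\<in>UNIV. D k k l j * P l i)
    - (\<Sum>k\<in>UNIV. \<Sum>l\<in>UNIV. D k k i l * P l j)
    - (\<Sum>k\<in>UNIV. \<Sum>l\<in>UNIV. P l k * D l k i j)
    - (\<Sum>k\<in>UNIV. \<Sum>l\<in>UNIV. D j l k i * P k l)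
    + (\<Sum>k\<in>UNIV. \<Sum>l\<in>UNIV. D j k l i * P l k)
    + (\<Sum>k\<in>UNIV. \<Sum>l\<in>UNIV. D j k k l * P l i)
    + (\<Sum>k\<in>UNIV. \<Sum>l\<in>UNIV. P l j * D l k k i)
    + (\<Sum>l\<in>UNIV. \<Sum>k\<in>UNIV. P l i * D k k l j)
    - (\<Sum>l\<in>UNIV. \<Sum>k\<in>UNIV. P l i * D j k k l)
    + (\<Sum>l\<in>UNIV. \<Sum>k\<in>UNIV. P l j * D k k i l)
    - (\<Sum>l\<in>UNIV. \<Sum>k\<in>UNIV. P l j * D l k k i)
    = 0"
proof -
  have "(\<Sum>k\<in>UNIV. \<Sum>l\<in>UNIV. D k l i j * P k l)
      = (\<Sum>k\<in>UNIV. \<Sum>l\<in>UNIV. P l k * D l k i j)"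
    by (rule trans[OF _ sum.swap[of "\<lambda>k l. P l k * D l k i j", symmetric]]) (simp add: mult_ac)
  moreover have "(\<Sum>k\<in>UNIV. \<Sum>l\<in>UNIV. D k k l j * P l i)
      = (\<Sum>l\<in>UNIV. \<Sum>k\<in>UNIV. P l i * D k k l j)"
    by (rule trans[OF _ sum.swap[of "\<lambda>l k. P l i * D k k l j", symmetric]]) (simp add: mult_ac)
  moreover have "(\<Sum>k\<in>UNIV. \<Sum>l\<in>UNIV. D k k i l * P l j)
      = (\<Sum>l\<in>UNIV. \<Sum>k\<in>UNIV. P l j * D k k i l)"
    by (rule trans[OF _ sum.swap[of "\<lambda>l k. P l j * D k k i l", symmetric]]) (simp add: mult_ac)
  moreover have "(\<Sum>k\<in>UNIV. \<Sum>l\<in>UNIV. D j l k i * P k l)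
      = (\<Sum>k\<in>UNIV. \<Sum>l\<in>UNIV. D j k l i * P l k)"
    by (rule sum.swap)
  moreover have "(\<Sum>k\<in>UNIV. \<Sum>l\<in>UNIV. D j k k l * P l i)
      = (\<Sum>l\<in>UNIV. \<Sum>k\<in>UNIV. P l i * D j k k l)"
    by (rule trans[OF _ sum.swap[of "\<lambda>l k. P l i * D j k k l", symmetric]]) (simp add: mult_ac)
  moreover have "(\<Sum>k\<in>UNIV. \<Sum>l\<in>UNIV. P l j * D l k k i)
      = (\<Sum>l\<in>UNIV. \<Sum>k\<in>UNIV. P l j * D l k k i)"
    by (rule sum.swap)
  ultimately show ?thesis by linarith
qed

lemma ricci_form_natural_quadratic_terms:
  fixes G :: "'n::finite \<Rightarrow> 'n \<Rightarrow> 'n \<Rightarrow> real" and P :: "'n \<Rightarrow> 'n \<Rightarrow> real"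
  assumes G_sym: "\<And>k a b. G k a b = G k b a"
  shows "(\<Sum>k\<in>UNIV. \<Sum>p\<in>UNIV. \<Sum>l\<in>UNIV. G l k p * P k l * G p i j)
    - (\<Sum>k\<in>UNIV. \<Sum>p\<in>UNIV. \<Sum>l\<in>UNIV. G k l p * P l k * G p i j)
    - (\<Sum>k\<in>UNIV. \<Sum>p\<in>UNIV. \<Sum>l\<in>UNIV. G k k l * P l p * G p i j)
    + (\<Sum>k\<in>UNIV. \<Sum>p\<in>UNIV. \<Sum>l\<in>UNIV. G k k p * (G l i j * P p l))
    - (\<Sum>k\<in>UNIV. \<Sum>p\<in>UNIV. \<Sum>l\<in>UNIV. G k k p * (G p l j * P l i))
    - (\<Sum>k\<in>UNIV. \<Sum>p\<in>UNIV. \<Sum>l\<in>UNIV. G k k p * (G p i l * P l j))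
    - (\<Sum>k\<in>UNIV. \<Sum>p\<in>UNIV. \<Sum>l\<in>UNIV. G l j p * P k l * G p k i)
    + (\<Sum>k\<in>UNIV. \<Sum>p\<in>UNIV. \<Sum>l\<in>UNIV. G k l p * P l j * G p k i)
    + (\<Sum>k\<in>UNIV. \<Sum>p\<in>UNIV. \<Sum>l\<in>UNIV. G k j l * P l p * G p k i)
    - (\<Sum>k\<in>UNIV. \<Sum>p\<in>UNIV. \<Sum>l\<in>UNIV. G k j p * (G l k i * P p l))
    + (\<Sum>k\<in>UNIV. \<Sum>p\<in>UNIV. \<Sum>l\<in>UNIV. G k j p * (G p l i * P l k))
    + (\<Sum>k\<in>UNIV. \<Sum>p\<in>UNIV. \<Sum>l\<in>UNIV. G k j p * (G p k l * P l i))
    + (\<Sum>l\<in>UNIV. \<Sum>k\<in>UNIV. \<Sum>p\<in>UNIV. P l i * (G k k p * G p l j))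
    - (\<Sum>l\<in>UNIV. \<Sum>k\<in>UNIV. \<Sum>p\<in>UNIV. P l i * (G k j p * G p k l))
    + (\<Sum>l\<in>UNIV. \<Sum>k\<in>UNIV. \<Sum>p\<in>UNIV. P l j * (G k k p * G p i l))
    - (\<Sum>l\<in>UNIV. \<Sum>k\<in>UNIV. \<Sum>p\<in>UNIV. P l j * (G k l p * G p k i))
    = 0"
proof -
  have "(\<Sum>k\<in>UNIV. \<Sum>p\<in>UNIV. \<Sum>l\<in>UNIV. G k k l * P l p * G p i j)
      = (\<Sum>k\<in>UNIV. \<Sum>p\<in>UNIV. \<Sum>l\<in>UNIV. G k k p * (G l i j * P p l))"
    by (rule trans[OF _ sum3_swap23[of "\<lambda>k p l. G k k p * (G l i j * P p l)", symmetric]]) (simp add: mult_ac)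
  moreover have "(\<Sum>k\<in>UNIV. \<Sum>p\<in>UNIV. \<Sum>l\<in>UNIV. G k k p * (G p l j * P l i))
      = (\<Sum>l\<in>UNIV. \<Sum>k\<in>UNIV. \<Sum>p\<in>UNIV. P l i * (G k k p * G p l j))"
    by (rule trans[OF sum3_rotate[of "\<lambda>k p l. G k k p * (G p l j * P l i)"]]) (simp add: mult_ac)
  moreover have "(\<Sum>k\<in>UNIV. \<Sum>p\<in>UNIV. \<Sum>l\<in>UNIV. G k k p * (G p i l * P l j))
      = (\<Sum>l\<in>UNIV. \<Sum>k\<in>UNIV. \<Sum>p\<in>UNIV. P l j * (G k k p * G p i l))"
    by (rule trans[OF sum3_rotate[of "\<lambda>k p l. G k k p * (G p i l * P l j)"]]) (simp add: mult_ac)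
  moreover have "(\<Sum>k\<in>UNIV. \<Sum>p\<in>UNIV. \<Sum>l\<in>UNIV. G k l p * P l j * G p k i)
      = (\<Sum>l\<in>UNIV. \<Sum>k\<in>UNIV. \<Sum>p\<in>UNIV. P l j * (G k l p * G p k i))"
    by (rule trans[OF sum3_rotate[of "\<lambda>k p l. G k l p * P l j * G p k i"]]) (simp add: mult_ac)
  moreover have "(\<Sum>k\<in>UNIV. \<Sum>p\<in>UNIV. \<Sum>l\<in>UNIV. G k j p * (G p k l * P l i))
      = (\<Sum>l\<in>UNIV. \<Sum>k\<in>UNIV. \<Sum>p\<in>UNIV. P l i * (G k j p * G p k l))"
    by (rule trans[OF sum3_rotate[of "\<lambda>k p l. G k j p * (G p k l * P l i)"]]) (simp add: mult_ac)
  moreover have "(\<Sum>k\<in>UNIV. \<Sum>p\<in>UNIV. \<Sum>l\<in>UNIV. G l k p * P k l * G p i j)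
      = (\<Sum>k\<in>UNIV. \<Sum>p\<in>UNIV. \<Sum>l\<in>UNIV. G k l p * P l k * G p i j)"
    by (rule trans[OF _ sum3_swap13[of "\<lambda>k p l. G k l p * P l k * G p i j", symmetric]]) (simp add: mult_ac)
  moreover have "(\<Sum>k\<in>UNIV. \<Sum>p\<in>UNIV. \<Sum>l\<in>UNIV. G l j p * P k l * G p k i)
      = (\<Sum>k\<in>UNIV. \<Sum>p\<in>UNIV. \<Sum>l\<in>UNIV. G k j p * (G p l i * P l k))"
    by (rule trans[OF _ sum3_swap13[of "\<lambda>k p l. G k j p * (G p l i * P l k)", symmetric]]) (simp add: mult_ac)
  moreover have "(\<Sum>k\<in>UNIV. \<Sum>p\<in>UNIV. \<Sum>l\<in>UNIV. G k j l * P l p * G p k i)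
      = (\<Sum>k\<in>UNIV. \<Sum>p\<in>UNIV. \<Sum>l\<in>UNIV. G k j p * (G l k i * P p l))"
    by (rule trans[OF _ sum3_swap23[of "\<lambda>k p l. G k j p * (G l k i * P p l)", symmetric]]) (simp add: mult_ac)
  ultimately show ?thesis by linarith
qed

lemma ricci_form_natural:
  fixes G :: "'n::finite \<Rightarrow> 'n \<Rightarrow> 'n \<Rightarrow> real" and D T :: "'n \<Rightarrow> 'n \<Rightarrow> 'n \<Rightarrow> 'n \<Rightarrow> real"
    and P :: "'n \<Rightarrow> 'n \<Rightarrow> real" and W :: "'n \<Rightarrow> 'n \<Rightarrow> 'n \<Rightarrow> real"
  assumes G_sym: "\<And>k a b. G k a b = G k b a" and W_sym: "\<And>k a b. W k a b = W k b a"
    and T_sym: "\<And>k. T k i k j = T j k k i"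
  shows "ricci_form_variation G (christoffel_drift G P W)
      (\<lambda>m k a b. christoffel_drift_deriv G D P W T m k a b - (\<Sum>l\<in>UNIV. P l m * D l k a b)) i j
    + (\<Sum>l\<in>UNIV. P l i * ricci_form G D l j) + (\<Sum>l\<in>UNIV. P l j * ricci_form G D i l) = 0"
proof -
  have "(\<Sum>k\<in>UNIV. T k i k j) = (\<Sum>k\<in>UNIV. T j k k i)"
    using T_sym by simp
  then show ?thesis
    using ricci_form_natural_hessian_terms[where G = G and W = W and i = i and j = j, OF G_sym W_sym]
      ricci_form_natural_christoffel_derivative_terms[where D = D and P = P and i = i and j = j]
      ricci_form_natural_quadratic_terms[where G = G and P = P and i = i and j = j, OF G_sym]
    unfolding ricci_form_variation_def christoffel_drift_def christoffel_drift_deriv_def ricci_form_def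
    by (simp only: distrib_left distrib_right right_diff_distrib left_diff_distrib sum.distrib
        sum_subtractf sum_distrib_left sum_distrib_right sum_negf mult_minus_left mult_minus_right)
qed

section \<open>Vector fields with \<open>\<nabla>V = a Id\<close>\<close>

locale homothetic_field = riemannian_chart U g for U :: "(real^'n::finite) set" and g +
  fixes V :: "real^'n \<Rightarrow> real^'n" and a :: real
  assumes vector_field: "vector_field_on U V"
    and cov_deriv_V: "\<forall>X. \<forall>x\<in>U. cov_deriv g X V x = a *\<^sub>R X x"
begin

lemma smooth_V [simp]: "smooth_on U (\<lambda>y. V y $ k)"
  using vector_field unfolding vector_field_on_def by blast

abbreviation dV :: "'n \<Rightarrow> 'n \<Rightarrow> real^'n \<Rightarrow> real" where
  "dV k j \<equiv> pd j (\<lambda>y. V y $ k)"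

lemma dV_eq:
  assumes "x \<in> U"
  shows "dV k j x = (if j = k then a else 0) - (\<Sum>m\<in>UNIV. \<Gamma> k j m x * V x $ m)"
proof -
  have "cov_deriv g (\<lambda>_. axis j 1) V x $ k = (a *\<^sub>R axis j 1) $ k"
    using cov_deriv_V assms by simp
  then show ?thesis
    by (auto simp: cov_deriv_def axis_def if_mult_distrib cong: if_cong)
qed

lemma pd_dV:
  assumes x: "x \<in> U"
  shows "pd i (dV k j) x = - (\<Sum>m\<in>UNIV. pd i (\<Gamma> k j m) x * V x $ m) - a * \<Gamma> k j i x
     + (\<Sum>m\<in>UNIV. \<Sum>l\<in>UNIV. \<Gamma> k j m x * \<Gamma> m i l x * V x $ l)"
proof -
  have "pd i (dV k j) x = pd i (\<lambda>y. (if j = k then a else 0) - (\<Sum>m\<in>UNIV. \<Gamma> k j m y * V y $ m)) x"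
    using open_U x by (rule pd_cong_open) (simp add: dV_eq)
  also have "\<dots> = - (\<Sum>m\<in>UNIV. pd i (\<Gamma> k j m) x * V x $ m) - (\<Sum>m\<in>UNIV. \<Gamma> k j m x * dV m i x)"
    using x by (simp add: sum.distrib)
  also have "(\<Sum>m\<in>UNIV. \<Gamma> k j m x * dV m i x)
      = a * \<Gamma> k j i x - (\<Sum>m\<in>UNIV. \<Sum>l\<in>UNIV. \<Gamma> k j m x * \<Gamma> m i l x * V x $ l)"
    by (simp add: dV_eq[OF x] right_diff_distrib sum_subtractf sum_distrib_left mult.assoc
        if_mult_distrib cong: if_cong)
  finally show ?thesis by simp
qed

text \<open>\<open>R(X, Y) V = 0\<close>: the curvature of \<open>\<nabla>V = a Id\<close> is \<open>a (\<nabla>\<^sub>XY - \<nabla>\<^sub>YX - [X, Y]) = 0\<close>.\<close>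
lemma riemann_V_last:
  assumes x: "x \<in> U"
  shows "(\<Sum>m\<in>UNIV. V x $ m * riemann k i j m x) = 0"
proof -
  have "pd i (dV k j) x = pd j (dV k i) x"
    using open_U x by (rule smooth_on_pd_commute) simp
  moreover have "(\<Sum>m\<in>UNIV. \<Sum>l\<in>UNIV. \<Gamma> k j m x * \<Gamma> m i l x * V x $ l)
      = (\<Sum>m\<in>UNIV. V x $ m * (\<Sum>l\<in>UNIV. \<Gamma> k j l x * \<Gamma> l i m x))"
    "(\<Sum>m\<in>UNIV. \<Sum>l\<in>UNIV. \<Gamma> k i m x * \<Gamma> m j l x * V x $ l)
      = (\<Sum>m\<in>UNIV. V x $ m * (\<Sum>l\<in>UNIV. \<Gamma> k i l x * \<Gamma> l j m x))"
    by (subst sum.swap, simp add: sum_distrib_left algebra_simps)+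
  moreover have "(\<Sum>m\<in>UNIV. V x $ m * riemann k i j m x)
      = (\<Sum>m\<in>UNIV. pd i (\<Gamma> k j m) x * V x $ m) - (\<Sum>m\<in>UNIV. pd j (\<Gamma> k i m) x * V x $ m)
      + (\<Sum>m\<in>UNIV. V x $ m * (\<Sum>l\<in>UNIV. \<Gamma> k i l x * \<Gamma> l j m x))
      - (\<Sum>m\<in>UNIV. V x $ m * (\<Sum>l\<in>UNIV. \<Gamma> k j l x * \<Gamma> l i m x))"
    unfolding riemann_def by (simp add: sum.distrib sum_subtractf algebra_simps sum_distrib_left)
  ultimately show ?thesis
    using pd_dV[OF x, where i = i and j = j] pd_dV[OF x, where i = j and j = i]
      christoffel_symmetric[OF x, of k i j] by simp
qed

lemma ricci_V: "x \<in> U \<Longrightarrow> (\<Sum>m\<in>UNIV. V x $ m * ricci g m j x) = 0"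
  by (simp add: ricci_riemann sum_distrib_left riemann_V_last flip: sum.swap[of _ UNIV UNIV])

text \<open>\<open>R(V, X) Y = 0\<close>, from \<open>R(X, Y) V = 0\<close> by pair symmetry.\<close>
lemma riemann_V_first:
  assumes x: "x \<in> U"
  shows "(\<Sum>m\<in>UNIV. V x $ m * riemann k m i j x) = 0"
proof -
  have "(\<Sum>m\<in>UNIV. V x $ m * riemann_lowered j d m i x) = 0" for d
  proof -
    have "(\<Sum>m\<in>UNIV. V x $ m * riemann_lowered j d m i x)
        = (\<Sum>q\<in>UNIV. g x $ i $ q * (\<Sum>m\<in>UNIV. V x $ m * riemann q j d m x))"
      unfolding riemann_lowered_def
      by (simp add: sum_distrib_left mult_ac) (rule sum.swap)
    then show ?thesis by (simp add: riemann_V_last[OF x])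
  qed
  moreover have "(\<Sum>m\<in>UNIV. V x $ m * riemann k m i j x)
      = (\<Sum>d\<in>UNIV. ginv g k d x * (\<Sum>m\<in>UNIV. V x $ m * riemann_lowered j d m i x))"
    by (simp add: riemann_raise[OF x] riemann_lowered_pair_symmetric[OF x, of _ i j]
        sum_distrib_left mult_ac) (rule sum.swap)
  ultimately show ?thesis by simp
qed

lemma lie_deriv_metric_eq:
  assumes x: "x \<in> U"
  shows "lie_deriv_metric g V i j x = 2 * a * g x $ i $ j"
proof -
  have "(\<Sum>k\<in>UNIV. V x $ k * dg k i j x)
      = (\<Sum>k\<in>UNIV. \<Sum>l\<in>UNIV. V x $ k * (g x $ l $ j * \<Gamma> l k i x))
      + (\<Sum>k\<in>UNIV. \<Sum>l\<in>UNIV. V x $ k * (g x $ i $ l * \<Gamma> l k j x))"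
    by (simp add: metric_compatibility[OF x] sum_distrib_left distrib_left sum.distrib)
  also have "\<dots> = (\<Sum>k\<in>UNIV. \<Sum>m\<in>UNIV. g x $ k $ j * \<Gamma> k i m x * V x $ m)
      + (\<Sum>k\<in>UNIV. \<Sum>m\<in>UNIV. g x $ i $ k * \<Gamma> k j m x * V x $ m)"
    by (subst (1 2) sum.swap) (simp add: christoffel_symmetric[OF x, of _ i] christoffel_symmetric[OF x, of _ j] mult_ac)
  finally have "(\<Sum>k\<in>UNIV. V x $ k * dg k i j x) = \<dots>" .
  moreover have "(\<Sum>k\<in>UNIV. g x $ k $ j * dV k i x)
      = a * g x $ i $ j - (\<Sum>k\<in>UNIV. \<Sum>m\<in>UNIV. g x $ k $ j * \<Gamma> k i m x * V x $ m)"
    "(\<Sum>k\<in>UNIV. g x $ i $ k * dV k j x)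
      = a * g x $ i $ j - (\<Sum>k\<in>UNIV. \<Sum>m\<in>UNIV. g x $ i $ k * \<Gamma> k j m x * V x $ m)"
    by (simp_all add: dV_eq[OF x] right_diff_distrib sum_subtractf sum_distrib_left mult.assoc
        metric_symmetric[OF x, of j i] if_mult_distrib cong: if_cong)
  ultimately show ?thesis
    unfolding lie_deriv_metric_def by (simp add: sum.distrib)
qed

abbreviation eta :: "'n \<Rightarrow> real^'n \<Rightarrow> real" where
  "eta \<equiv> dual_form g V"

lemma eta_eq: "eta i = (\<lambda>y. \<Sum>j\<in>UNIV. g y $ i $ j * V y $ j)"
  by (rule ext) (simp add: dual_form_def)

lemma lie_deriv_eta:
  assumes x: "x \<in> U"
  shows "(\<Sum>l\<in>UNIV. V x $ l * pd l (eta i) x) + (\<Sum>l\<in>UNIV. dV l i x * eta l x) = 2 * a * eta i x"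
proof -
  have lie_g: "(\<Sum>l\<in>UNIV. V x $ l * dg l i j x) + (\<Sum>l\<in>UNIV. dV l i x * g x $ l $ j)
      = 2 * a * g x $ i $ j - (\<Sum>l\<in>UNIV. dV l j x * g x $ i $ l)" for j
    using lie_deriv_metric_eq[OF x, of i j] unfolding lie_deriv_metric_def by (simp add: sum.distrib mult_ac)
  have pd_eta: "(\<Sum>l\<in>UNIV. V x $ l * pd l (eta i) x)
      = (\<Sum>j\<in>UNIV. V x $ j * (\<Sum>l\<in>UNIV. V x $ l * dg l i j x))
      + (\<Sum>l\<in>UNIV. \<Sum>j\<in>UNIV. V x $ l * (g x $ i $ j * dV j l x))"
    unfolding eta_eq using x
    by (simp add: sum_distrib_left distrib_left sum.distrib mult_ac) (subst sum.swap, simp add: mult_ac)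
  have dV_eta: "(\<Sum>l\<in>UNIV. dV l i x * eta l x) = (\<Sum>j\<in>UNIV. V x $ j * (\<Sum>l\<in>UNIV. dV l i x * g x $ l $ j))"
    unfolding dual_form_def by (simp add: sum_distrib_left mult_ac) (rule sum.swap)
  have "(\<Sum>l\<in>UNIV. V x $ l * pd l (eta i) x) + (\<Sum>l\<in>UNIV. dV l i x * eta l x)
      = (\<Sum>j\<in>UNIV. V x $ j * ((\<Sum>l\<in>UNIV. V x $ l * dg l i j x) + (\<Sum>l\<in>UNIV. dV l i x * g x $ l $ j)))
      + (\<Sum>l\<in>UNIV. \<Sum>j\<in>UNIV. V x $ l * (g x $ i $ j * dV j l x))"
    unfolding pd_eta dV_eta by (simp add: distrib_left sum.distrib)
  also have "\<dots> = (\<Sum>j\<in>UNIV. V x $ j * (2 * a * g x $ i $ j))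
      - (\<Sum>j\<in>UNIV. V x $ j * (\<Sum>l\<in>UNIV. dV l j x * g x $ i $ l))
      + (\<Sum>l\<in>UNIV. \<Sum>j\<in>UNIV. V x $ l * (g x $ i $ j * dV j l x))"
    by (simp add: lie_g right_diff_distrib sum_subtractf)
  also have "(\<Sum>j\<in>UNIV. V x $ j * (\<Sum>l\<in>UNIV. dV l j x * g x $ i $ l))
      = (\<Sum>l\<in>UNIV. \<Sum>j\<in>UNIV. V x $ l * (g x $ i $ j * dV j l x))"
    by (simp add: sum_distrib_left mult_ac)
  also have "(\<Sum>j\<in>UNIV. V x $ j * (2 * a * g x $ i $ j)) = 2 * a * eta i x"
    unfolding dual_form_def by (simp add: sum_distrib_left mult_ac)
  finally show ?thesis by simp
qed

definition christoffel_rate :: "'n \<Rightarrow> 'n \<Rightarrow> 'n \<Rightarrow> real^'n \<Rightarrow> real" where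
  "christoffel_rate k i j x =
     christoffel_drift (\<lambda>k i j. \<Gamma> k i j x) (\<lambda>k l. dV k l x) (\<lambda>k a b. pd a (dV k b) x) k i j"

text \<open>The Lie derivative of the Levi-Civita connection along the homothetic field \<open>V\<close> vanishes.\<close>
lemma V_pd_christoffel:
  assumes x: "x \<in> U"
  shows "(\<Sum>m\<in>UNIV. V x $ m * pd m (\<Gamma> k i j) x) = christoffel_rate k i j x"
proof -
  let ?S1 = "\<Sum>m\<in>UNIV. \<Sum>l\<in>UNIV. \<Gamma> k j m x * \<Gamma> m i l x * V x $ l"
  let ?S2 = "\<Sum>l\<in>UNIV. \<Sum>m\<in>UNIV. \<Gamma> l i j x * \<Gamma> k l m x * V x $ m"
  let ?S3 = "\<Sum>l\<in>UNIV. \<Sum>m\<in>UNIV. \<Gamma> k l j x * \<Gamma> l i m x * V x $ m"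
  let ?S4 = "\<Sum>l\<in>UNIV. \<Sum>m\<in>UNIV. \<Gamma> k i l x * \<Gamma> l j m x * V x $ m"
  have "(\<Sum>l\<in>UNIV. \<Gamma> l i j x * dV k l x) = a * \<Gamma> k i j x - ?S2"
    "(\<Sum>l\<in>UNIV. \<Gamma> k l j x * dV l i x) = a * \<Gamma> k i j x - ?S3"
    "(\<Sum>l\<in>UNIV. \<Gamma> k i l x * dV l j x) = a * \<Gamma> k i j x - ?S4"
    by (simp_all add: dV_eq[OF x] right_diff_distrib sum_subtractf sum_distrib_left mult.assoc
        if_mult_distrib cong: if_cong)
  moreover have "?S1 = ?S3"
    by (intro sum.cong refl) (simp add: christoffel_symmetric[OF x, of k j])
  ultimately have rate: "christoffel_rate k i j x = (\<Sum>m\<in>UNIV. pd i (\<Gamma> k j m) x * V x $ m) - ?S2 + ?S4"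
    unfolding christoffel_rate_def christoffel_drift_def
    using christoffel_symmetric[OF x, of k j i] by (simp add: pd_dV[OF x] sum_subtractf)
  have "(\<Sum>m\<in>UNIV. V x $ m * pd i (\<Gamma> k m j) x) = (\<Sum>m\<in>UNIV. pd i (\<Gamma> k j m) x * V x $ m)"
    by (intro sum.cong refl) (metis pd_christoffel_symmetric[OF x] mult.commute)
  moreover have "(\<Sum>m\<in>UNIV. V x $ m * (\<Sum>l\<in>UNIV. \<Gamma> k m l x * \<Gamma> l i j x)) = ?S2"
    by (subst sum.swap) (simp add: sum_distrib_left christoffel_symmetric[OF x, of k] mult_ac)
  moreover have "(\<Sum>m\<in>UNIV. V x $ m * (\<Sum>l\<in>UNIV. \<Gamma> k i l x * \<Gamma> l m j x)) = ?S4"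
    by (subst sum.swap) (simp add: sum_distrib_left christoffel_symmetric[OF x, of _ _ j] mult_ac)
  moreover have "(\<Sum>m\<in>UNIV. V x $ m * pd m (\<Gamma> k i j) x) = (\<Sum>m\<in>UNIV. V x $ m * pd i (\<Gamma> k m j) x)
      - (\<Sum>m\<in>UNIV. V x $ m * (\<Sum>l\<in>UNIV. \<Gamma> k m l x * \<Gamma> l i j x))
      + (\<Sum>m\<in>UNIV. V x $ m * (\<Sum>l\<in>UNIV. \<Gamma> k i l x * \<Gamma> l m j x))"
    using riemann_V_first[OF x, of k i j] unfolding riemann_def
    by (simp add: algebra_simps sum.distrib sum_subtractf sum_distrib_left)
  ultimately show ?thesis using rate by simp
qed

lemma christoffel_rate_eq:
  "christoffel_rate k i j = (\<lambda>y. - pd i (dV k j) y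
     + (\<Sum>l\<in>UNIV. \<Gamma> l i j y * dV k l y - \<Gamma> k l j y * dV l i y - \<Gamma> k i l y * dV l j y))"
  by (rule ext) (simp add: christoffel_rate_def christoffel_drift_def)

lemma pd_christoffel_rate:
  assumes x: "x \<in> U"
  shows "pd m (christoffel_rate k i j) x =
    christoffel_drift_deriv (\<lambda>k i j. \<Gamma> k i j x) (\<lambda>m k i j. pd m (\<Gamma> k i j) x) (\<lambda>k l. dV k l x)
      (\<lambda>k a b. pd a (dV k b) x) (\<lambda>m a k b. pd m (pd a (dV k b)) x) m k i j"
  unfolding christoffel_rate_eq christoffel_drift_deriv_def using x by simp

lemma V_pd_pd_christoffel:
  assumes x: "x \<in> U"
  shows "(\<Sum>l\<in>UNIV. V x $ l * pd l (pd m (\<Gamma> k i j)) x)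
    = pd m (christoffel_rate k i j) x - (\<Sum>l\<in>UNIV. dV l m x * pd l (\<Gamma> k i j) x)"
proof -
  have "pd m (christoffel_rate k i j) x = pd m (\<lambda>y. \<Sum>l\<in>UNIV. V y $ l * pd l (\<Gamma> k i j) y) x"
    using open_U x by (rule pd_cong_open) (simp add: V_pd_christoffel)
  also have "\<dots> = (\<Sum>l\<in>UNIV. dV l m x * pd l (\<Gamma> k i j) x) + (\<Sum>l\<in>UNIV. V x $ l * pd m (pd l (\<Gamma> k i j)) x)"
    using x by (simp add: sum.distrib)
  also have "(\<Sum>l\<in>UNIV. V x $ l * pd m (pd l (\<Gamma> k i j)) x) = (\<Sum>l\<in>UNIV. V x $ l * pd l (pd m (\<Gamma> k i j)) x)"
    using open_U x by (simp add: smooth_on_pd_commute[of U x "\<Gamma> k i j"])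
  finally show ?thesis by simp
qed

lemma V_pd_christoffel_products:
  assumes x: "x \<in> U"
  shows "(\<Sum>l\<in>UNIV. V x $ l * (pd l (\<Gamma> k k p) x * \<Gamma> p i j x + \<Gamma> k k p x * pd l (\<Gamma> p i j) x
      - (pd l (\<Gamma> k j p) x * \<Gamma> p k i x + \<Gamma> k j p x * pd l (\<Gamma> p k i) x)))
    = christoffel_rate k k p x * \<Gamma> p i j x + \<Gamma> k k p x * christoffel_rate p i j x
      - christoffel_rate k j p x * \<Gamma> p k i x - \<Gamma> k j p x * christoffel_rate p k i x"
  by (simp add: V_pd_christoffel[OF x, symmetric] sum_distrib_left sum_distrib_right sum.distrib
      sum_subtractf algebra_simps)

lemma V_pd_ricci:
  assumes x: "x \<in> U"
  shows "(\<Sum>l\<in>UNIV. V x $ l * pd l (ricci g i j) x) =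
    ricci_form_variation (\<lambda>k i j. \<Gamma> k i j x) (\<lambda>k i j. christoffel_rate k i j x)
      (\<lambda>m k a b. pd m (christoffel_rate k a b) x - (\<Sum>l\<in>UNIV. dV l m x * pd l (\<Gamma> k a b) x)) i j"
proof -
  define Y where "Y k p l = pd l (\<Gamma> k k p) x * \<Gamma> p i j x + \<Gamma> k k p x * pd l (\<Gamma> p i j) x
      - (pd l (\<Gamma> k j p) x * \<Gamma> p k i x + \<Gamma> k j p x * pd l (\<Gamma> p k i) x)" for k p l
  have "ricci g i j = (\<lambda>x. \<Sum>k\<in>UNIV. pd k (\<Gamma> k i j) x - pd j (\<Gamma> k k i) x
      + (\<Sum>p\<in>UNIV. \<Gamma> k k p x * \<Gamma> p i j x - \<Gamma> k j p x * \<Gamma> p k i x))"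
    by (rule ext) (simp add: ricci_def)
  then have "(\<Sum>l\<in>UNIV. V x $ l * pd l (ricci g i j) x) = (\<Sum>l\<in>UNIV. \<Sum>k\<in>UNIV.
      V x $ l * (pd l (pd k (\<Gamma> k i j)) x - pd l (pd j (\<Gamma> k k i)) x + (\<Sum>p\<in>UNIV. Y k p l)))"
    unfolding Y_def using x by (simp add: sum_distrib_left)
  also have "\<dots> = (\<Sum>k\<in>UNIV. \<Sum>l\<in>UNIV.
      V x $ l * (pd l (pd k (\<Gamma> k i j)) x - pd l (pd j (\<Gamma> k k i)) x + (\<Sum>p\<in>UNIV. Y k p l)))"
    by (rule sum.swap)
  also have "\<dots> = (\<Sum>k\<in>UNIV. (\<Sum>l\<in>UNIV. V x $ l * pd l (pd k (\<Gamma> k i j)) x)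
      - (\<Sum>l\<in>UNIV. V x $ l * pd l (pd j (\<Gamma> k k i)) x) + (\<Sum>p\<in>UNIV. \<Sum>l\<in>UNIV. V x $ l * Y k p l))"
  proof (intro sum.cong refl)
    fix k
    have "(\<Sum>l\<in>UNIV. V x $ l * (\<Sum>p\<in>UNIV. Y k p l)) = (\<Sum>p\<in>UNIV. \<Sum>l\<in>UNIV. V x $ l * Y k p l)"
      by (simp add: sum_distrib_left) (rule sum.swap)
    then show "(\<Sum>l\<in>UNIV. V x $ l * (pd l (pd k (\<Gamma> k i j)) x - pd l (pd j (\<Gamma> k k i)) x + (\<Sum>p\<in>UNIV. Y k p l)))
      = (\<Sum>l\<in>UNIV. V x $ l * pd l (pd k (\<Gamma> k i j)) x)
      - (\<Sum>l\<in>UNIV. V x $ l * pd l (pd j (\<Gamma> k k i)) x) + (\<Sum>p\<in>UNIV. \<Sum>l\<in>UNIV. V x $ l * Y k p l)"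
      by (simp only: distrib_left right_diff_distrib sum.distrib sum_subtractf)
  qed
  finally show ?thesis
    unfolding ricci_form_variation_def Y_def
    by (simp add: V_pd_pd_christoffel[OF x] V_pd_christoffel_products[OF x] sum.distrib sum_subtractf)
qed

lemma ricci_eq_ricci_form: "ricci g i j x = ricci_form (\<lambda>k i j. \<Gamma> k i j x) (\<lambda>m k i j. pd m (\<Gamma> k i j) x) i j"
  by (simp add: ricci_def ricci_form_def)

lemma lie_deriv_ricci:
  assumes x: "x \<in> U"
  shows "(\<Sum>l\<in>UNIV. V x $ l * pd l (ricci g i j) x) + (\<Sum>l\<in>UNIV. dV l i x * ricci g l j x)
    + (\<Sum>l\<in>UNIV. dV l j x * ricci g i l x) = 0"
proof -
  have "pd k (pd i (dV k j)) x = pd k (pd j (dV k i)) x" for k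
    using open_U x by (rule pd_cong_open) (simp add: smooth_on_pd_commute[OF open_U])
  also have "pd k (pd j (dV k i)) x = pd j (pd k (dV k i)) x" for k
    using open_U x by (rule smooth_on_pd_commute) simp
  finally have T_sym: "pd k (pd i (dV k j)) x = pd j (pd k (dV k i)) x" for k .
  have W_sym: "pd a (dV k b) x = pd b (dV k a) x" for k a b
    using open_U x by (rule smooth_on_pd_commute) simp
  have "(\<lambda>k i j. christoffel_rate k i j x)
      = christoffel_drift (\<lambda>k i j. \<Gamma> k i j x) (\<lambda>k l. dV k l x) (\<lambda>k a b. pd a (dV k b) x)"
    by (simp add: christoffel_rate_def fun_eq_iff)
  then show ?thesis
    unfolding V_pd_ricci[OF x] pd_christoffel_rate[OF x] ricci_eq_ricci_form
    by (simp only:) (rule ricci_form_natural, use christoffel_symmetric[OF x] W_sym T_sym in auto)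
qed

end

section \<open>Almost \<open>\<eta>\<close>-Ricci solitons\<close>

locale homothetic_soliton = homothetic_field U g V a for U :: "(real^'n::finite) set" and g V a +
  fixes lam mu :: "real^'n \<Rightarrow> real"
  assumes soliton: "almost_eta_ricci_soliton U g (dual_form g V) V lam mu"
begin

definition V_norm2 :: "real^'n \<Rightarrow> real" where
  "V_norm2 y = (\<Sum>i\<in>UNIV. V y $ i * eta i y)"

lemma V_norm2_pos:
  assumes y: "y \<in> U" and "V y \<noteq> 0"
  shows "V_norm2 y > 0"
proof -
  have "V_norm2 y = (\<Sum>i\<in>UNIV. \<Sum>j\<in>UNIV. g y $ i $ j * V y $ i * V y $ j)"
    unfolding V_norm2_def dual_form_def by (simp add: sum_distrib_left mult_ac)
  then show ?thesis using metric_pos[OF assms] by simp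
qed

lemma trace_eta_eta:
  assumes y: "y \<in> U"
  shows "(\<Sum>i\<in>UNIV. \<Sum>j\<in>UNIV. ginv g i j y * (eta i y * eta j y)) = V_norm2 y"
proof -
  have "(\<Sum>j\<in>UNIV. ginv g i j y * eta j y) = V y $ i" for i
  proof -
    have "(\<Sum>j\<in>UNIV. ginv g i j y * eta j y) = (\<Sum>m\<in>UNIV. (\<Sum>j\<in>UNIV. ginv g i j y * g y $ j $ m) * V y $ m)"
      unfolding dual_form_def
      by (simp add: sum_distrib_left sum_distrib_right mult.assoc) (rule sum.swap)
    then show ?thesis by (simp add: ginv_metric[OF y] if_mult_distrib cong: if_cong)
  qed
  then show ?thesis
    unfolding V_norm2_def by (simp add: sum_distrib_left mult_ac flip: sum_distrib_left)
qed

lemma smooth_lam [simp]: "smooth_on U lam" and smooth_mu [simp]: "smooth_on U mu"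
  using soliton unfolding almost_eta_ricci_soliton_def by blast+

lemma smooth_eta [simp]: "smooth_on U (eta i)"
  unfolding eta_eq by simp

lemma ricci_soliton_eq:
  assumes y: "y \<in> U"
  shows "ricci g i j y = (lam y - a) * g y $ i $ j + mu y * (eta i y * eta j y)"
proof -
  have "(1/2) * lie_deriv_metric g V i j y + ricci g i j y = lam y * g y $ i $ j + mu y * eta i y * eta j y"
    using soliton y unfolding almost_eta_ricci_soliton_def by blast
  then show ?thesis using lie_deriv_metric_eq[OF y, of i j] by (simp add: algebra_simps)
qed

lemma soliton_contract_V:
  assumes y: "y \<in> U" and V: "V y \<noteq> 0"
  shows "lam y - a + mu y * V_norm2 y = 0"
proof -
  have "(lam y - a) * eta j y + mu y * V_norm2 y * eta j y = 0" for j
  proof -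
    have "(\<Sum>m\<in>UNIV. V y $ m * g y $ m $ j) = eta j y"
      unfolding dual_form_def by (intro sum.cong refl) (simp add: metric_symmetric[OF y, of _ j] mult.commute)
    moreover have "(\<Sum>m\<in>UNIV. V y $ m * ((lam y - a) * g y $ m $ j + mu y * (eta m y * eta j y)))
        = (lam y - a) * (\<Sum>m\<in>UNIV. V y $ m * g y $ m $ j) + mu y * V_norm2 y * eta j y"
      unfolding V_norm2_def
      by (simp add: sum.distrib sum_subtractf sum_distrib_left sum_distrib_right algebra_simps)
    ultimately show ?thesis
      using ricci_V[OF y, of j] by (simp add: ricci_soliton_eq[OF y])
  qed
  then have "(\<Sum>j\<in>UNIV. V y $ j * ((lam y - a) * eta j y + mu y * V_norm2 y * eta j y)) = 0"
    by simp
  moreover have "(\<Sum>j\<in>UNIV. V y $ j * ((lam y - a) * eta j y + mu y * V_norm2 y * eta j y))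
      = (lam y - a + mu y * V_norm2 y) * (\<Sum>j\<in>UNIV. V y $ j * eta j y)"
    by (simp add: sum_distrib_left algebra_simps)
  ultimately have "(lam y - a + mu y * V_norm2 y) * V_norm2 y = 0"
    by (simp add: V_norm2_def)
  then show ?thesis using V_norm2_pos[OF y V] by simp
qed

lemma scalar_curvature_soliton:
  assumes y: "y \<in> U"
  shows "scalar_curvature g y = (lam y - a) * real CARD('n) + mu y * V_norm2 y"
proof -
  have "scalar_curvature g y = (lam y - a) * (\<Sum>i\<in>UNIV. \<Sum>j\<in>UNIV. ginv g i j y * g y $ i $ j)
      + mu y * (\<Sum>i\<in>UNIV. \<Sum>j\<in>UNIV. ginv g i j y * (eta i y * eta j y))"
    unfolding scalar_curvature_def
    by (simp add: ricci_soliton_eq[OF y] sum.distrib sum_subtractf sum_distrib_left algebra_simps)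
  then show ?thesis by (simp add: trace_ginv_metric[OF y] trace_eta_eta[OF y])
qed

text \<open>The Lie derivative of the soliton equation: \<open>L\<^sub>V Ric = 0\<close>, \<open>L\<^sub>V g = 2a g\<close> and \<open>L\<^sub>V \<eta> = 2a \<eta>\<close>.\<close>
lemma lie_deriv_soliton:
  assumes y: "y \<in> U"
  shows "((\<Sum>l\<in>UNIV. V y $ l * pd l lam y) + 2 * a * (lam y - a)) * g y $ i $ j
      + ((\<Sum>l\<in>UNIV. V y $ l * pd l mu y) + 4 * a * mu y) * (eta i y * eta j y) = 0"
proof -
  have pd_ricci: "pd l (ricci g i j) y = pd l lam y * g y $ i $ j + (lam y - a) * dg l i j y
      + (pd l mu y * (eta i y * eta j y) + mu y * (pd l (eta i) y * eta j y + eta i y * pd l (eta j) y))" for l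
  proof -
    have "pd l (ricci g i j) y = pd l (\<lambda>z. (lam z - a) * g z $ i $ j + mu z * (eta i z * eta j z)) y"
      using open_U y by (rule pd_cong_open) (simp add: ricci_soliton_eq)
    then show ?thesis using y by simp
  qed
  have lie_g: "(\<Sum>l\<in>UNIV. V y $ l * dg l i j y) + (\<Sum>l\<in>UNIV. dV l i y * g y $ l $ j)
      + (\<Sum>l\<in>UNIV. dV l j y * g y $ i $ l) = 2 * a * g y $ i $ j"
    using lie_deriv_metric_eq[OF y, of i j] unfolding lie_deriv_metric_def by (simp add: sum.distrib mult_ac)
  have "(\<Sum>l\<in>UNIV. V y $ l * pd l (ricci g i j) y) + (\<Sum>l\<in>UNIV. dV l i y * ricci g l j y)
      + (\<Sum>l\<in>UNIV. dV l j y * ricci g i l y)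
    = (\<Sum>l\<in>UNIV. V y $ l * pd l lam y) * g y $ i $ j
      + (lam y - a) * ((\<Sum>l\<in>UNIV. V y $ l * dg l i j y) + (\<Sum>l\<in>UNIV. dV l i y * g y $ l $ j)
          + (\<Sum>l\<in>UNIV. dV l j y * g y $ i $ l))
      + (\<Sum>l\<in>UNIV. V y $ l * pd l mu y) * (eta i y * eta j y)
      + mu y * eta j y * ((\<Sum>l\<in>UNIV. V y $ l * pd l (eta i) y) + (\<Sum>l\<in>UNIV. dV l i y * eta l y))
      + mu y * eta i y * ((\<Sum>l\<in>UNIV. V y $ l * pd l (eta j) y) + (\<Sum>l\<in>UNIV. dV l j y * eta l y))"
    by (simp add: pd_ricci ricci_soliton_eq[OF y] sum.distrib sum_subtractf sum_distrib_left
        sum_distrib_right algebra_simps)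
  also have "\<dots> = ((\<Sum>l\<in>UNIV. V y $ l * pd l lam y) + 2 * a * (lam y - a)) * g y $ i $ j
      + ((\<Sum>l\<in>UNIV. V y $ l * pd l mu y) + 4 * a * mu y) * (eta i y * eta j y)"
    by (simp only: lie_g lie_deriv_eta[OF y]) (simp add: algebra_simps)
  finally show ?thesis using lie_deriv_ricci[OF y] by simp
qed

lemma lam_const_where_V_nonzero:
  assumes c: "\<forall>y\<in>U. scalar_curvature g y = c" and n: "CARD('n) > 1"
    and y: "y \<in> U" "V y \<noteq> 0"
  shows "lam y = a + c / (real CARD('n) - 1)"
proof -
  have "c = (lam y - a) * (real CARD('n) - 1)"
    using c y scalar_curvature_soliton[OF y(1)] soliton_contract_V[OF y] by (simp add: algebra_simps)
  then show ?thesis using n by (simp add: field_simps)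
qed

lemma metric_eta_independent:
  assumes n: "CARD('n) > 1" and y: "y \<in> U"
    and comb: "\<And>i j. A * g y $ i $ j + B * (eta i y * eta j y) = 0"
  shows "A = 0"
proof (cases "V y = 0")
  case True
  obtain i :: 'n where True by blast
  have "A * g y $ i $ i = 0" using comb[of i i] True by (simp add: dual_form_def)
  then show ?thesis using metric_diagonal_pos[OF y, of i] by simp
next
  case False
  have "(\<Sum>i\<in>UNIV. \<Sum>j\<in>UNIV. V y $ i * V y $ j * (A * g y $ i $ j + B * (eta i y * eta j y)))
      = A * V_norm2 y + B * (V_norm2 y * V_norm2 y)"
    unfolding V_norm2_def dual_form_def
    by (simp add: sum.distrib sum_distrib_left sum_product algebra_simps)
  then have "(A + B * V_norm2 y) * V_norm2 y = 0"
    using comb by (simp add: algebra_simps)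
  then have "A + B * V_norm2 y = 0" using V_norm2_pos[OF y False] by simp
  moreover have "(\<Sum>i\<in>UNIV. \<Sum>j\<in>UNIV. ginv g i j y * (A * g y $ i $ j + B * (eta i y * eta j y)))
      = A * (\<Sum>i\<in>UNIV. \<Sum>j\<in>UNIV. ginv g i j y * g y $ i $ j)
      + B * (\<Sum>i\<in>UNIV. \<Sum>j\<in>UNIV. ginv g i j y * (eta i y * eta j y))"
    by (simp add: sum.distrib sum_distrib_left algebra_simps)
  then have "(\<Sum>i\<in>UNIV. \<Sum>j\<in>UNIV. ginv g i j y * (A * g y $ i $ j + B * (eta i y * eta j y)))
      = A * real CARD('n) + B * V_norm2 y"
    by (simp add: trace_ginv_metric[OF y] trace_eta_eta[OF y])
  then have "A * real CARD('n) + B * V_norm2 y = 0" using comb by simp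
  ultimately have "A * (real CARD('n) - 1) = 0"
    by (simp only: right_diff_distrib mult_1_right)
  then show ?thesis using n by simp
qed

lemma pd_lam_along_V:
  assumes c: "\<forall>y\<in>U. scalar_curvature g y = c" and n: "CARD('n) > 1" and x: "x \<in> U"
  shows "(\<Sum>l\<in>UNIV. V x $ l * pd l lam x) = 0"
proof (cases "V x = 0")
  case False
  define U' where "U' = {y \<in> U. V y \<noteq> 0}"
  have "U' = (\<Union>k. U \<inter> (\<lambda>y. V y $ k) -` (- {0}))"
    unfolding U'_def by (auto simp: vec_eq_iff)
  moreover have "open (U \<inter> (\<lambda>y. V y $ k) -` (- {0}))" for k
    using open_U smooth_on_imp_continuous_on[OF smooth_V[of k]]
    by (auto intro: continuous_open_preimage)
  ultimately have "open U'" by (metis open_UN)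
  then have "pd l lam x = pd l (\<lambda>y. a + c / (real CARD('n) - 1)) x" for l
    by (rule pd_cong_open) (use x False in \<open>simp_all add: U'_def lam_const_where_V_nonzero[OF c n]\<close>)
  then show ?thesis by simp
qed simp

lemma ricci_flat_point:
  assumes c: "\<forall>y\<in>U. scalar_curvature g y = c" and n: "CARD('n) > 1" and "a \<noteq> 0" and x: "x \<in> U"
  shows "ricci g i j x = 0"
proof -
  have "2 * a * (lam x - a) = 0"
    by (rule metric_eta_independent[OF n x]) (use lie_deriv_soliton[OF x] pd_lam_along_V[OF c n x] in simp)
  then have lam: "lam x = a" using \<open>a \<noteq> 0\<close> by simp
  show ?thesis
  proof (cases "V x = 0")
    case True
    then show ?thesis using ricci_soliton_eq[OF x] lam by (simp add: dual_form_def)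
  next
    case False
    then have "mu x = 0" using soliton_contract_V[OF x False] V_norm2_pos[OF x False] lam by simp
    then show ?thesis using ricci_soliton_eq[OF x] lam by simp
  qed
qed

end

theorem mainTheorem2:
  fixes U :: "(real^'n::finite) set"
    and g :: "real^'n \<Rightarrow> real^'n^'n"
    and V :: "real^'n \<Rightarrow> real^'n"
    and lam mu :: "real^'n \<Rightarrow> real"
    and a :: real
  assumes "CARD('n) > 3"
    and "riemannian_metric_on U g"
    and "\<exists>c. \<forall>x\<in>U. scalar_curvature g x = c"
    and "vector_field_on U V"
    and "a \<noteq> 0"
    and "\<forall>X. \<forall>x\<in>U. cov_deriv g X V x = a *\<^sub>R X x"
    and "almost_eta_ricci_soliton U g (dual_form g V) V lam mu"
  shows "ricci_flat_on U g"
proof -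
  interpret homothetic_soliton U g V a lam mu
    using assms(2,4,6,7) by unfold_locales
  obtain c where c: "\<forall>x\<in>U. scalar_curvature g x = c"
    using assms(3) by blast
  have "CARD('n) > 1"
    using assms(1) by simp
  then show ?thesis
    unfolding ricci_flat_on_def using ricci_flat_point[OF c _ assms(5)] by blast
qed

end
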